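(* Let $\mathscr M$, $\mathscr N$ be modules over $\mathbb Z[\mathbb L]_{\mathrm{loc}}=\mathbb Z[\mathbb L,\mathbb L^{-1},(1-\mathbb L^n)^{-1}, n\ge1]$, and $\mathbf T=(T_1,\dots,T_r)$. If $a(\mathbf T)=\sum a_{\mathbf n}\mathbf T^{\mathbf n}\in\mathscr M[[\mathbf T]]_{\mathrm{int}}$ and $b(\mathbf T)=\sum b_{\mathbf n}\mathbf T^{\mathbf n}\in\mathscr N[[\mathbf T]]_{\mathrm{ssr}}$, then $a(\mathbf T)\otimes_{\mathscr H}b(\mathbf T):=\sum_{\mathbf n}a_{\mathbf n}\otimes b_{\mathbf n}\mathbf T^{\mathbf n}$ lies in $(\mathscr M\otimes_{\mathbb Z[\mathbb L]_{\mathrm{loc}}}\mathscr N)[[\mathbf T]]_{\mathrm{int}}$.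
   Context: For a module $\mathscr M$ over $\mathbb Z[\mathbb L,\mathbb L^{-1}]$, $\mathscr M[[\mathbf T]]_{\mathrm{ssr}}=\mathscr M[\mathbf T][(1-\mathbb L^m\mathbf T^{\mathbf n})^{-1}]_{m\in\mathbb Z_{\le0},\,\mathbf n\in\mathbb N^r\setminus\{0\}}$ (strongly rational series) and $\mathscr M[[\mathbf T]]_{\mathrm{int}}=\mathscr M[\mathbf T][(1-\mathbb L^m\mathbf T^{\mathbf n})^{-1}]_{m\in\mathbb Z_{<0},\,\mathbf n\in\mathbb N^r\setminus\{0\}}$ (integrable series), both regarded as submodules of $\mathscr M[[\mathbf T]]$ via $\frac1{1-\mathbb L^m\mathbf T^{\mathbf n}}=\sum_{l\ge0}(\mathbb L^m\mathbf T^{\mathbf n})^l$. *)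

theory Defs
  imports Main "HOL-Computational_Algebra.Polynomial" "HOL-Computational_Algebra.Fraction_Field"
begin

section \<open>The ring Z[L]_loc = Z[L, L^-1, (1 - L^n)^-1 (n >= 1)]\<close>

text \<open>Realised as the subring of the fraction field Q(L) = Frac(Z[L]) consisting of
 fractions p / (L^k * prod_{n in A} (1 - L^n)) with A a finite multiset of positive integers.\<close>

definition zden :: "nat \<Rightarrow> nat multiset \<Rightarrow> int poly" where
  "zden k A = monom 1 k * prod_mset (image_mset (\<lambda>n. 1 - monom 1 n) A)"

definition zloc_set :: "int poly fract set" where
  "zloc_set = {Fract p (zden k A) | p k A. \<forall>n\<in>#A. 0 < n}"

lemma one_minus_monom_nz: "0 < n \<Longrightarrow> (1 - monom (1::int) n) \<noteq> 0"
proof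
  assume "0 < n" "1 - monom (1::int) n = 0"
  hence "coeff (1 - monom (1::int) n) n = 0" by simp
  with \<open>0 < n\<close> show False by (simp add: coeff_monom)
qed

lemma zden_nz: "\<forall>n\<in>#A. 0 < n \<Longrightarrow> zden k A \<noteq> 0"
  unfolding zden_def using one_minus_monom_nz
  by (auto simp: prod_mset_zero_iff monom_eq_0_iff)

lemma zden_mult: "zden k A * zden j B = zden (k + j) (A + B)"
  unfolding zden_def by (simp add: mult_monom algebra_simps)

lemma zloc_add: "x \<in> zloc_set \<Longrightarrow> y \<in> zloc_set \<Longrightarrow> x + y \<in> zloc_set"
  unfolding zloc_set_def
proof clarify
  fix p q :: "int poly" and k j :: nat and A B :: "nat multiset" assume A: "\<forall>n\<in>#A. 0 < n" and B: "\<forall>n\<in>#B. 0 < n"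
  have "Fract p (zden k A) + Fract q (zden j B) =
        Fract (p * zden j B + q * zden k A) (zden (k + j) (A + B))"
    using zden_nz[OF A] zden_nz[OF B] by (simp add: zden_mult)
  moreover have "\<forall>n\<in>#A + B. 0 < n" using A B by auto
  ultimately show "\<exists>r m C. Fract p (zden k A) + Fract q (zden j B) = Fract r (zden m C) \<and> (\<forall>n\<in>#C. 0 < n)"
    by blast
qed

lemma zloc_mult: "x \<in> zloc_set \<Longrightarrow> y \<in> zloc_set \<Longrightarrow> x * y \<in> zloc_set"
  unfolding zloc_set_def
proof clarify
  fix p q :: "int poly" and k j :: nat and A B :: "nat multiset" assume A: "\<forall>n\<in>#A. 0 < n" and B: "\<forall>n\<in>#B. 0 < n"
  have "Fract p (zden k A) * Fract q (zden j B) = Fract (p * q) (zden (k + j) (A + B))"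
    by (simp add: zden_mult)
  moreover have "\<forall>n\<in>#A + B. 0 < n" using A B by auto
  ultimately show "\<exists>r m C. Fract p (zden k A) * Fract q (zden j B) = Fract r (zden m C) \<and> (\<forall>n\<in>#C. 0 < n)"
    by blast
qed

lemma zloc_uminus: "x \<in> zloc_set \<Longrightarrow> - x \<in> zloc_set"
  unfolding zloc_set_def by (auto, metis minus_fract)

lemma zloc_zero: "0 \<in> zloc_set"
  unfolding zloc_set_def Zero_fract_def
  by (rule CollectI, rule exI[of _ 0], rule exI[of _ 0], rule exI[of _ "{#}"]) (simp add: zden_def)

lemma zloc_one: "1 \<in> zloc_set"
  unfolding zloc_set_def One_fract_def
  by (rule CollectI, rule exI[of _ 1], rule exI[of _ 0], rule exI[of _ "{#}"]) (simp add: zden_def)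

typedef zloc = zloc_set
  using zloc_zero by blast

setup_lifting type_definition_zloc

instantiation zloc :: comm_ring_1
begin
lift_definition zero_zloc :: zloc is 0 by (rule zloc_zero)
lift_definition one_zloc :: zloc is 1 by (rule zloc_one)
lift_definition plus_zloc :: "zloc \<Rightarrow> zloc \<Rightarrow> zloc" is "(+)" by (rule zloc_add)
lift_definition times_zloc :: "zloc \<Rightarrow> zloc \<Rightarrow> zloc" is "(*)" by (rule zloc_mult)
lift_definition uminus_zloc :: "zloc \<Rightarrow> zloc" is uminus by (rule zloc_uminus)
lift_definition minus_zloc :: "zloc \<Rightarrow> zloc \<Rightarrow> zloc" is "(-)"
  by (metis diff_conv_add_uminus zloc_add zloc_uminus)
instance
  by standard (transfer; simp add: algebra_simps)+
end

lift_definition Lpow :: "int \<Rightarrow> zloc" is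
  "\<lambda>m. if 0 \<le> m then Fract (monom 1 (nat m)) 1 else Fract 1 (monom 1 (nat (- m)))"
proof -
  fix m :: int
  have a: "Fract (monom 1 (nat m)) 1 \<in> zloc_set" unfolding zloc_set_def
    by (rule CollectI, rule exI[of _ "monom 1 (nat m)"], rule exI[of _ 0], rule exI[of _ "{#}"])
       (simp add: zden_def)
  have b: "Fract 1 (monom 1 (nat (- m))) \<in> zloc_set" unfolding zloc_set_def
    by (rule CollectI, rule exI[of _ 1], rule exI[of _ "nat (- m)"], rule exI[of _ "{#}"])
       (simp add: zden_def)
  show "(if 0 \<le> m then Fract (monom 1 (nat m)) 1 else Fract 1 (monom 1 (nat (- m)))) \<in> zloc_set"
    using a b by simp
qed

text \<open>A series sum_n f_n T^n with coefficients in a module is a function from exponent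
 vectors ('r => nat, 'r a finite index type of size r) to the module.
 geom_mul scale c n f is f(T) * 1/(1 - c T^n) = f(T) * sum_l (c T^n)^l.\<close>

definition geom_mul :: "('a::comm_ring_1 \<Rightarrow> 'm::ab_group_add \<Rightarrow> 'm) \<Rightarrow> 'a \<Rightarrow> ('r::finite \<Rightarrow> nat)
     \<Rightarrow> (('r \<Rightarrow> nat) \<Rightarrow> 'm) \<Rightarrow> (('r \<Rightarrow> nat) \<Rightarrow> 'm)" where
  "geom_mul scale c n f =
     (\<lambda>k. \<Sum>l\<in>{l::nat. \<forall>i. l * n i \<le> k i}. scale (c ^ l) (f (\<lambda>i. k i - l * n i)))"

text \<open>Elements of M[T][(1 - L^m T^n)^-1]_{(m,n) in S} expanded in M[[T]]: a polynomial
 P in M[T] times finitely many geometric series 1/(1 - L^m T^n) with (m,n) in S.\<close>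

definition localized_series ::
  "(int \<Rightarrow> bool) \<Rightarrow> (zloc \<Rightarrow> 'm::ab_group_add \<Rightarrow> 'm) \<Rightarrow> (('r::finite \<Rightarrow> nat) \<Rightarrow> 'm) \<Rightarrow> bool" where
  "localized_series cond scale f \<longleftrightarrow>
     (\<exists>P ds. finite {k. P k \<noteq> 0} \<and> (\<forall>(m, n)\<in>set ds. cond m \<and> n \<noteq> (\<lambda>_. 0)) \<and>
        f = foldr (\<lambda>(m, n). geom_mul scale (Lpow m) n) ds P)"

definition is_ssr :: "(zloc \<Rightarrow> 'm::ab_group_add \<Rightarrow> 'm) \<Rightarrow> (('r::finite \<Rightarrow> nat) \<Rightarrow> 'm) \<Rightarrow> bool" where
  "is_ssr scale f \<longleftrightarrow> localized_series (\<lambda>m. m \<le> 0) scale f"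

definition is_int :: "(zloc \<Rightarrow> 'm::ab_group_add \<Rightarrow> 'm) \<Rightarrow> (('r::finite \<Rightarrow> nat) \<Rightarrow> 'm) \<Rightarrow> bool" where
  "is_int scale f \<longleftrightarrow> localized_series (\<lambda>m. m < 0) scale f"

definition zloc_bilinear :: "(zloc \<Rightarrow> 'm::ab_group_add \<Rightarrow> 'm) \<Rightarrow> (zloc \<Rightarrow> 'n::ab_group_add \<Rightarrow> 'n)
     \<Rightarrow> (zloc \<Rightarrow> 'p::ab_group_add \<Rightarrow> 'p) \<Rightarrow> ('m \<Rightarrow> 'n \<Rightarrow> 'p) \<Rightarrow> bool" where
  "zloc_bilinear sM sN sP t \<longleftrightarrow>
     (\<forall>y. module_hom sM sP (\<lambda>x. t x y)) \<and> (\<forall>x. module_hom sN sP (t x))"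

end

theory Submission
  imports Defs "HOL-Library.Fun_Lexorder"
begin

text \<open>Write \<open>a = P \<cdot> \<Prod>\<^sub>i 1/(1 - L^m\<^sub>i T^n\<^sub>i)\<close> with all \<open>m\<^sub>i < 0\<close> and
  \<open>b = Q \<cdot> \<Prod>\<^sub>j 1/(1 - L^m'\<^sub>j T^n'\<^sub>j)\<close> with all \<open>m'\<^sub>j \<le> 0\<close>. By bilinearity the Hadamard product is a
  finite combination, with coefficients \<open>t (P u) (Q w)\<close>, of the series
  \<open>H\<^sub>u\<^sub>,\<^sub>w = \<Sum> L^(\<Sum>f\<^sub>i m\<^sub>i + \<Sum>g\<^sub>j m'\<^sub>j) T^k\<close> over multiplicity vectors \<open>(f, g)\<close> with
  \<open>u + \<Sum>f\<^sub>i n\<^sub>i = k = w + \<Sum>g\<^sub>j n'\<^sub>j\<close>. The solutions of the homogeneous equation form a saturated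
  submonoid \<open>K\<close> of \<open>\<nat>^(p+q)\<close>, those of the inhomogeneous one a set \<open>S\<close> with \<open>S + K \<subseteq> S\<close> and
  \<open>S - S \<subseteq> K\<close>. By Dickson's lemma \<open>K\<close> has finitely many minimal nonzero elements, which generate it;
  choosing lexicographically least representations over them and counting by inclusion-exclusion
  shows that the generating function of \<open>S\<close> is rational with denominators \<open>1 - L^m(g) T^n(g)\<close>,
  \<open>g\<close> minimal in \<open>K\<close>. A nonzero \<open>g \<in> K\<close> has nonzero \<open>f\<close>-part (else \<open>\<Sum>g\<^sub>j n'\<^sub>j = 0\<close> forces
  \<open>g = 0\<close>), so \<open>m(g) < 0\<close> and these denominators are again integrable.\<close>

lemma Lpow_0 [simp]: "Lpow 0 = 1"
  by transfer (simp add: One_fract_def)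

lemma Fract_monom_eq:
  "int a - int b = int c - int d \<Longrightarrow>
     Fract (monom (1::int) a) (monom 1 b) = Fract (monom 1 c) (monom 1 d)"
proof -
  assume "int a - int b = int c - int d"
  hence "a + d = c + b" by linarith
  hence "monom (1::int) a * monom 1 d = monom 1 c * monom 1 b" by (simp add: mult_monom)
  thus ?thesis by (simp add: eq_fract monom_eq_0_iff)
qed

lemma Rep_Lpow:
  assumes "int a - int b = m"
  shows "Rep_zloc (Lpow m) = Fract (monom 1 a) (monom 1 b)"
proof (cases "0 \<le> m")
  case True
  have "Fract (monom (1::int) (nat m)) (monom 1 0) = Fract (monom 1 a) (monom 1 b)"
    by (rule Fract_monom_eq) (use assms True in linarith)
  thus ?thesis using True by (simp add: Lpow.rep_eq one_poly_eq_simps)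
next
  case False
  have "Fract (monom (1::int) 0) (monom 1 (nat (- m))) = Fract (monom 1 a) (monom 1 b)"
    by (rule Fract_monom_eq) (use assms False in linarith)
  thus ?thesis using False by (simp add: Lpow.rep_eq one_poly_eq_simps)
qed

lemma Lpow_add: "Lpow (m + m') = Lpow m * Lpow m'"
proof -
  have "\<exists>a b. int a - int b = k" for k :: int
    by (intro exI[of _ "nat k"] exI[of _ "nat (- k)"]) simp
  then obtain a b a' b' where ab: "int a - int b = m" and ab': "int a' - int b' = m'"
    by meson
  have "Rep_zloc (Lpow (m + m')) = Fract (monom 1 (a + a')) (monom 1 (b + b'))"
    by (rule Rep_Lpow) (use ab ab' in auto)
  also have "\<dots> = Rep_zloc (Lpow m * Lpow m')"
    by (simp add: times_zloc.rep_eq Rep_Lpow[OF ab] Rep_Lpow[OF ab'] mult_monom)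
  finally show ?thesis by (simp add: Rep_zloc_inject)
qed

lemma Lpow_power: "Lpow m ^ l = Lpow (int l * m)"
  by (induction l) (auto simp: Lpow_add algebra_simps)

section \<open>Finitely supported exponent vectors\<close>

definition vanishes_from :: "nat \<Rightarrow> (nat \<Rightarrow> nat) \<Rightarrow> bool" where
  "vanishes_from h f \<longleftrightarrow> (\<forall>i\<ge>h. f i = 0)"

lemma vanishes_from_Suc_iff: "vanishes_from (Suc h) f \<longleftrightarrow> vanishes_from h (\<lambda>i. f (Suc i))"
  unfolding vanishes_from_def by (metis Suc_le_D Suc_le_mono)

lemma vanishes_from_case_nat [simp]: "vanishes_from (Suc h) (case_nat l f) \<longleftrightarrow> vanishes_from h f"
  by (simp add: vanishes_from_Suc_iff)

lemma finite_vanishes_from_bounded: "finite {f. vanishes_from h f \<and> (\<forall>i. f i \<le> M)}"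
proof (induction h)
  case 0
  have "{f. vanishes_from 0 f \<and> (\<forall>i. f i \<le> M)} \<subseteq> {\<lambda>_. 0}" by (auto simp: vanishes_from_def)
  then show ?case using finite_subset by blast
next
  case (Suc h)
  have "{f. vanishes_from (Suc h) f \<and> (\<forall>i. f i \<le> M)} \<subseteq>
        (\<lambda>(f, c). f(h := c)) ` ({f. vanishes_from h f \<and> (\<forall>i. f i \<le> M)} \<times> {..M})"
  proof
    fix f assume f: "f \<in> {f. vanishes_from (Suc h) f \<and> (\<forall>i. f i \<le> M)}"
    have "f = (\<lambda>(g, c). g(h := c)) (f(h := 0), f h)" by auto
    moreover have "(f(h := 0), f h) \<in> {f. vanishes_from h f \<and> (\<forall>i. f i \<le> M)} \<times> {..M}"
      using f by (auto simp: vanishes_from_def)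
    ultimately show "f \<in> (\<lambda>(f, c). f(h := c)) ` ({f. vanishes_from h f \<and> (\<forall>i. f i \<le> M)} \<times> {..M})"
      by blast
  qed
  then show ?case using Suc finite_subset by blast
qed

lemma vanishes_from_sum_pos:
  assumes "vanishes_from h f" "f \<noteq> (\<lambda>_. 0)"
  shows "0 < (\<Sum>i<h. f i)"
proof -
  obtain i where i: "f i \<noteq> 0" using assms(2) by (meson ext)
  hence "i < h" using assms(1) unfolding vanishes_from_def by (meson not_le)
  hence "f i \<le> (\<Sum>i<h. f i)" by (intro member_le_sum) auto
  thus ?thesis using i by simp
qed

definition drop_coord :: "nat \<Rightarrow> (nat \<Rightarrow> nat) \<Rightarrow> nat \<Rightarrow> nat" where
  "drop_coord j f = (\<lambda>i. if i < j then f i else f (Suc i))"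

lemma le_if_drop_coord_le:
  assumes "f j = g j" and "\<forall>i. drop_coord j f i \<le> drop_coord j g i"
  shows "f i \<le> g i"
proof (cases i j rule: linorder_cases)
  case less thus ?thesis using assms(2)[rule_format, of i] by (simp add: drop_coord_def)
next
  case equal thus ?thesis using assms(1) by simp
next
  case greater
  then obtain i' where i': "i = Suc i'" "j \<le> i'" by (cases i) auto
  thus ?thesis using assms(2)[rule_format, of i'] by (simp add: drop_coord_def)
qed

definition le_antichain :: "(nat \<Rightarrow> nat) set \<Rightarrow> bool" where
  "le_antichain X \<longleftrightarrow> (\<forall>f\<in>X. \<forall>g\<in>X. (\<forall>i. f i \<le> g i) \<longrightarrow> f = g)"

lemma le_antichain_drop_coord:
  assumes "le_antichain X"
  shows "inj_on (drop_coord j) {x\<in>X. x j = c}" and "le_antichain (drop_coord j ` {x\<in>X. x j = c})"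
proof -
  have le: "\<forall>i. x i \<le> y i" if "x j = c" "y j = c" "\<forall>i. drop_coord j x i \<le> drop_coord j y i" for x y
    using that le_if_drop_coord_le[of x j y] by simp
  show "inj_on (drop_coord j) {x\<in>X. x j = c}"
    using le assms by (intro inj_onI) (auto simp: le_antichain_def)
  show "le_antichain (drop_coord j ` {x\<in>X. x j = c})"
    unfolding le_antichain_def
  proof (intro ballI impI)
    fix f g assume "f \<in> drop_coord j ` {x\<in>X. x j = c}" "g \<in> drop_coord j ` {x\<in>X. x j = c}"
      and fg: "\<forall>i. f i \<le> g i"
    then obtain x y where "x \<in> X" "x j = c" "y \<in> X" "y j = c" "f = drop_coord j x" "g = drop_coord j y"
      by auto
    thus "f = g" using le[of x y] fg assms by (auto simp: le_antichain_def)
  qed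
qed

lemma le_antichain_subset_slices:
  assumes "le_antichain X" and "\<forall>f\<in>X. vanishes_from d f" and "x0 \<in> X"
  shows "X \<subseteq> {x0} \<union> (\<Union>j<d. \<Union>c<x0 j. {x\<in>X. x j = c})"
proof
  fix x assume x: "x \<in> X"
  show "x \<in> {x0} \<union> (\<Union>j<d. \<Union>c<x0 j. {x\<in>X. x j = c})"
  proof (cases "x = x0")
    case False
    hence "\<not> (\<forall>i. x0 i \<le> x i)" using assms(1,3) x unfolding le_antichain_def by metis
    then obtain j where j: "x j < x0 j" by (auto simp: not_le)
    hence "j < d" using assms(2,3) unfolding vanishes_from_def by (metis not_le not_less0)
    thus ?thesis using j x by blast
  qed simp
qed

lemma finite_le_antichain: "le_antichain X \<Longrightarrow> \<forall>f\<in>X. vanishes_from d f \<Longrightarrow> finite X"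
proof (induction d arbitrary: X)
  case 0
  hence "X \<subseteq> {\<lambda>_. 0}" by (auto simp: vanishes_from_def)
  thus ?case using finite_subset by blast
next
  case (Suc d)
  have slice: "finite {x\<in>X. x j = c}" if "j < Suc d" for j c
  proof -
    have "finite (drop_coord j ` {x\<in>X. x j = c})"
      using Suc.prems(2) that
      by (intro Suc.IH le_antichain_drop_coord(2)[OF Suc.prems(1)])
        (auto simp: vanishes_from_def drop_coord_def)
    thus ?thesis using finite_imageD le_antichain_drop_coord(1)[OF Suc.prems(1)] by blast
  qed
  show ?case
  proof (cases "X = {}")
    case False
    then obtain x0 where "x0 \<in> X" by blast
    hence "X \<subseteq> {x0} \<union> (\<Union>j<Suc d. \<Union>c<x0 j. {x\<in>X. x j = c})"
      by (rule le_antichain_subset_slices[OF Suc.prems])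
    moreover have "finite ({x0} \<union> (\<Union>j<Suc d. \<Union>c<x0 j. {x\<in>X. x j = c}))"
      using slice by (intro finite_UnI finite_UN_I) auto
    ultimately show ?thesis using finite_subset by blast
  qed simp
qed

definition minimal_elems :: "(nat \<Rightarrow> nat) set \<Rightarrow> (nat \<Rightarrow> nat) set" where
  "minimal_elems A = {m\<in>A. \<forall>a\<in>A. (\<forall>i. a i \<le> m i) \<longrightarrow> a = m}"

lemma finite_minimal_elems: "\<forall>f\<in>A. vanishes_from d f \<Longrightarrow> finite (minimal_elems A)"
  by (rule finite_le_antichain[of _ d]) (auto simp: minimal_elems_def le_antichain_def)

lemma ex_minimal_elem_below:
  assumes vanish: "\<forall>f\<in>A. vanishes_from d f" and x: "x \<in> A"
  shows "\<exists>m\<in>minimal_elems A. \<forall>i. m i \<le> x i"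
proof -
  obtain m where m: "m \<in> A" "\<forall>i. m i \<le> x i"
    and least: "\<And>y. y \<in> A \<Longrightarrow> \<forall>i. y i \<le> x i \<Longrightarrow> (\<Sum>i<d. m i) \<le> (\<Sum>i<d. y i)"
    using ex_has_least_nat[of "\<lambda>f. f \<in> A \<and> (\<forall>i. f i \<le> x i)" x "\<lambda>f. \<Sum>i<d. f i"] x by auto
  have "a = m" if a: "a \<in> A" "\<forall>i. a i \<le> m i" for a
  proof (rule ext)
    fix i
    have "(\<Sum>i<d. m i) \<le> (\<Sum>i<d. a i)" using least a m(2) le_trans by blast
    hence "\<not> (\<Sum>i<d. a i) < (\<Sum>i<d. m i)" by simp
    hence "i < d \<Longrightarrow> \<not> a i < m i" using a(2) by (metis lessThan_iff finite_lessThan sum_strict_mono_ex1)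
    moreover have "vanishes_from d a" "vanishes_from d m" using vanish a(1) m(1) by auto
    ultimately show "a i = m i" using a(2) unfolding vanishes_from_def by (metis le_neq_implies_less not_le)
  qed
  thus ?thesis using m by (auto simp: minimal_elems_def)
qed

section \<open>Products of geometric series\<close>

definition tdeg :: "nat \<Rightarrow> (nat \<Rightarrow> 'r \<Rightarrow> nat) \<Rightarrow> (nat \<Rightarrow> nat) \<Rightarrow> 'r \<Rightarrow> nat" where
  "tdeg h c f = (\<lambda>j. \<Sum>i<h. f i * c i j)"

definition ldeg :: "nat \<Rightarrow> (nat \<Rightarrow> int) \<Rightarrow> (nat \<Rightarrow> nat) \<Rightarrow> int" where
  "ldeg h e f = (\<Sum>i<h. int (f i) * e i)"

lemma tdeg_case_nat: "tdeg (Suc h) c (case_nat l f) = (\<lambda>j. l * c 0 j + tdeg h (\<lambda>i. c (Suc i)) f j)"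
  unfolding tdeg_def sum.lessThan_Suc_shift by simp

lemma ldeg_case_nat: "ldeg (Suc h) e (case_nat l f) = int l * e 0 + ldeg h (\<lambda>i. e (Suc i)) f"
  unfolding ldeg_def sum.lessThan_Suc_shift by simp

lemma tdeg_zero [simp]: "tdeg h c (\<lambda>_. 0) = (\<lambda>_. 0)"
  by (simp add: tdeg_def)

lemma tdeg_add: "tdeg h c (\<lambda>i. a i + b i) = (\<lambda>j. tdeg h c a j + tdeg h c b j)"
  unfolding tdeg_def by (simp add: sum.distrib algebra_simps)

lemma ldeg_add: "ldeg h e (\<lambda>i. a i + b i) = ldeg h e a + ldeg h e b"
  unfolding ldeg_def by (simp add: sum.distrib algebra_simps)

lemma tdeg_diff:
  assumes "\<forall>i. a i \<le> b i"
  shows "tdeg h c (\<lambda>i. b i - a i) = (\<lambda>j. tdeg h c b j - tdeg h c a j)"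
proof -
  have "b = (\<lambda>i. a i + (b i - a i))" using assms by auto
  hence "tdeg h c b = (\<lambda>j. tdeg h c a j + tdeg h c (\<lambda>i. b i - a i) j)"
    by (metis tdeg_add)
  thus ?thesis by (auto simp: fun_eq_iff)
qed

lemma tdeg_mono: "\<forall>i. a i \<le> b i \<Longrightarrow> tdeg h c a j \<le> tdeg h c b j"
  unfolding tdeg_def by (intro sum_mono mult_le_mono1) auto

lemma tdeg_cong: "(\<And>i. i < h \<Longrightarrow> c i = c' i) \<Longrightarrow> tdeg h c f = tdeg h c' f"
  unfolding tdeg_def by auto

lemma ldeg_cong: "(\<And>i. i < h \<Longrightarrow> e i = e' i) \<Longrightarrow> ldeg h e f = ldeg h e' f"
  unfolding ldeg_def by auto

lemma tdeg_tdeg: "tdeg d c (tdeg h G f) = tdeg h (\<lambda>j. tdeg d c (G j)) f"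
  unfolding tdeg_def
  by (auto simp: fun_eq_iff sum_distrib_left sum_distrib_right mult.assoc intro: sum.swap)

lemma ldeg_tdeg: "ldeg d e (tdeg h G f) = ldeg h (\<lambda>j. ldeg d e (G j)) f"
  unfolding tdeg_def ldeg_def
  by (auto simp: sum_distrib_left sum_distrib_right mult.assoc intro: sum.swap)

lemma tdeg_indicator: "j < h \<Longrightarrow> tdeg h G (\<lambda>i. if i = j then 1 else 0) = G j"
proof (rule ext)
  fix x assume "j < h"
  have "tdeg h G (\<lambda>i. if i = j then 1 else 0) x = (\<Sum>i<h. if i = j then G i x else 0)"
    unfolding tdeg_def by (rule sum.cong) auto
  thus "tdeg h G (\<lambda>i. if i = j then 1 else 0) x = G j x" using \<open>j < h\<close> by simp
qed

lemma coeff_le_tdeg: "i < h \<Longrightarrow> f i * c i j \<le> tdeg h c f j"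
  unfolding tdeg_def by (intro member_le_sum) auto

lemma tdeg_eq_0_imp:
  assumes "tdeg h c f = (\<lambda>_. 0)" "i < h" "c i \<noteq> (\<lambda>_. 0)"
  shows "f i = 0"
proof -
  obtain j where "c i j \<noteq> 0" using assms(3) by (meson ext)
  thus ?thesis using coeff_le_tdeg[OF assms(2), of f c j] assms(1) by simp
qed

lemma ldeg_neg:
  assumes "\<forall>i<h. e i < 0" "i0 < h" "f i0 \<noteq> 0"
  shows "ldeg h e f < 0"
proof -
  have "0 < (\<Sum>i<h. - (int (f i) * e i))"
    using assms by (intro sum_pos2[of _ i0]) (auto simp: mult_nonneg_nonpos mult_pos_neg)
  thus ?thesis by (simp add: ldeg_def sum_negf)
qed

lemma ldeg_nonpos: "\<forall>i<h. e i \<le> 0 \<Longrightarrow> ldeg h e f \<le> 0"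
  unfolding ldeg_def by (intro sum_nonpos) (auto simp: mult_nonneg_nonpos)

definition mults_below :: "nat \<Rightarrow> (nat \<Rightarrow> 'r \<Rightarrow> nat) \<Rightarrow> ('r \<Rightarrow> nat) \<Rightarrow> (nat \<Rightarrow> nat) set" where
  "mults_below h c k = {f. vanishes_from h f \<and> (\<forall>j. tdeg h c f j \<le> k j)}"

lemma finite_mults_below:
  fixes c :: "nat \<Rightarrow> 'r::finite \<Rightarrow> nat"
  assumes "\<forall>i<h. c i \<noteq> (\<lambda>_. 0)"
  shows "finite (mults_below h c k)"
proof -
  have "f i \<le> (\<Sum>j\<in>UNIV. k j)" if f: "f \<in> mults_below h c k" for f i
  proof (cases "i < h")
    case True
    then obtain j where j: "c i j \<noteq> 0" using assms by fastforce
    have "f i \<le> f i * c i j" using j by simp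
    also have "\<dots> \<le> tdeg h c f j" using True by (rule coeff_le_tdeg)
    also have "\<dots> \<le> k j" using f by (auto simp: mults_below_def)
    also have "\<dots> \<le> (\<Sum>j\<in>UNIV. k j)" by (intro member_le_sum) auto
    finally show ?thesis .
  next
    case False thus ?thesis using f by (simp add: mults_below_def vanishes_from_def)
  qed
  hence "mults_below h c k \<subseteq> {f. vanishes_from h f \<and> (\<forall>i. f i \<le> (\<Sum>j\<in>UNIV. k j))}"
    by (auto simp: mults_below_def)
  thus ?thesis using finite_vanishes_from_bounded finite_subset by fast
qed

lemma bij_betw_case_nat_mults_below:
  "bij_betw (\<lambda>(l, f). case_nat l f)
     (SIGMA l:{l. \<forall>j. l * c 0 j \<le> k j}. mults_below h (\<lambda>i. c (Suc i)) (\<lambda>j. k j - l * c 0 j))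
     (mults_below (Suc h) c k)"
proof (rule bij_betw_byWitness[where f' = "\<lambda>g. (g 0, \<lambda>i. g (Suc i))"])
  show "(\<lambda>(l, f). case_nat l f) `
      (SIGMA l:{l. \<forall>j. l * c 0 j \<le> k j}. mults_below h (\<lambda>i. c (Suc i)) (\<lambda>j. k j - l * c 0 j))
      \<subseteq> mults_below (Suc h) c k"
    by (auto simp: mults_below_def tdeg_case_nat) (metis add.commute le_diff_conv2)
  show "(\<lambda>g. (g 0, \<lambda>i. g (Suc i))) ` mults_below (Suc h) c k \<subseteq>
      (SIGMA l:{l. \<forall>j. l * c 0 j \<le> k j}. mults_below h (\<lambda>i. c (Suc i)) (\<lambda>j. k j - l * c 0 j))"
  proof (rule image_subsetI)
    fix g assume g: "g \<in> mults_below (Suc h) c k"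
    have geq: "g = case_nat (g 0) (\<lambda>i. g (Suc i))" by (auto split: nat.splits)
    from g have "vanishes_from (Suc h) (case_nat (g 0) (\<lambda>i. g (Suc i)))"
      "\<forall>j. tdeg (Suc h) c (case_nat (g 0) (\<lambda>i. g (Suc i))) j \<le> k j"
      unfolding mults_below_def by (subst (asm) geq; simp)+
    hence van: "vanishes_from h (\<lambda>i. g (Suc i))"
      and le: "\<And>j. g 0 * c 0 j + tdeg h (\<lambda>i. c (Suc i)) (\<lambda>i. g (Suc i)) j \<le> k j"
      by (simp_all add: tdeg_case_nat)
    have "g 0 * c 0 j \<le> k j" for j using le[of j] by linarith
    moreover have "tdeg h (\<lambda>i. c (Suc i)) (\<lambda>i. g (Suc i)) j \<le> k j - g 0 * c 0 j" for j
      using le[of j] by linarith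
    ultimately show "(g 0, \<lambda>i. g (Suc i)) \<in>
        (SIGMA l:{l. \<forall>j. l * c 0 j \<le> k j}. mults_below h (\<lambda>i. c (Suc i)) (\<lambda>j. k j - l * c 0 j))"
      using van by (simp add: mults_below_def)
  qed
qed (auto split: nat.splits)

lemma finite_geom_index:
  fixes n :: "'r \<Rightarrow> nat"
  assumes "n \<noteq> (\<lambda>_. 0)"
  shows "finite {l. \<forall>j. l * n j \<le> k j}"
proof -
  obtain j0 where "n j0 \<noteq> 0" using assms by fastforce
  hence "{l. \<forall>j. l * n j \<le> k j} \<subseteq> {..k j0}"
    by auto (metis le_trans mult_le_mono1 mult_1_right not_less_eq_eq Suc_leI neq0_conv
        mult.commute mult_le_cancel1 nat_mult_1)
  thus ?thesis using finite_subset by blast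
qed

definition factor_tdeg :: "(int \<times> ('r \<Rightarrow> nat)) list \<Rightarrow> nat \<Rightarrow> 'r \<Rightarrow> nat" where
  "factor_tdeg ds i = snd (ds ! i)"

definition factor_ldeg :: "(int \<times> ('r \<Rightarrow> nat)) list \<Rightarrow> nat \<Rightarrow> int" where
  "factor_ldeg ds i = fst (ds ! i)"

definition proper_factors :: "(int \<times> ('r \<Rightarrow> nat)) list \<Rightarrow> bool" where
  "proper_factors ds \<longleftrightarrow> (\<forall>(m, n)\<in>set ds. n \<noteq> (\<lambda>_. 0))"

abbreviation "tdeg_of ds \<equiv> tdeg (length ds) (factor_tdeg ds)"
abbreviation "ldeg_of ds \<equiv> ldeg (length ds) (factor_ldeg ds)"
abbreviation "mults_of ds \<equiv> mults_below (length ds) (factor_tdeg ds)"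

abbreviation geom_prod ::
  "(zloc \<Rightarrow> 'm::ab_group_add \<Rightarrow> 'm) \<Rightarrow> (int \<times> ('r::finite \<Rightarrow> nat)) list \<Rightarrow> (('r \<Rightarrow> nat) \<Rightarrow> 'm)
     \<Rightarrow> ('r \<Rightarrow> nat) \<Rightarrow> 'm" where
  "geom_prod sc ds P \<equiv> foldr (\<lambda>(m, n). geom_mul sc (Lpow m) n) ds P"

lemma proper_factors_nth: "proper_factors ds \<Longrightarrow> i < length ds \<Longrightarrow> factor_tdeg ds i \<noteq> (\<lambda>_. 0)"
  unfolding proper_factors_def factor_tdeg_def by (auto dest!: nth_mem)

lemma finite_mults_of: "proper_factors (ds :: (int \<times> ('r::finite \<Rightarrow> nat)) list) \<Longrightarrow> finite (mults_of ds k)"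
  by (simp add: finite_mults_below proper_factors_nth)

text \<open>A multiplicity vector \<open>f\<close>, choosing the term \<open>(L^m T^n)^(f i)\<close> from the \<open>i\<close>-th geometric
  series, contributes the monomial \<open>L^(ldeg_of ds f) T^(tdeg_of ds f)\<close>.\<close>

lemma geom_prod_expand:
  fixes ds :: "(int \<times> ('r::finite \<Rightarrow> nat)) list"
  assumes sc: "module sc" and "proper_factors ds"
  shows "geom_prod sc ds P k =
    (\<Sum>f\<in>mults_of ds k. sc (Lpow (ldeg_of ds f)) (P (\<lambda>j. k j - tdeg_of ds f j)))"
  using assms(2)
proof (induction ds arbitrary: k)
  case Nil
  have "mults_of [] k = {\<lambda>_. 0}" by (auto simp: mults_below_def vanishes_from_def)
  thus ?case by (simp add: ldeg_def tdeg_def module.scale_one[OF sc])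
next
  case (Cons d ds)
  obtain m n where d: "d = (m, n)" by fastforce
  have n: "n \<noteq> (\<lambda>_. 0)" and ds: "proper_factors ds"
    using Cons.prems d by (auto simp: proper_factors_def)
  define c where "c = factor_tdeg (d # ds)"
  define e where "e = factor_ldeg (d # ds)"
  have c: "c 0 = n" "(\<lambda>i. c (Suc i)) = factor_tdeg ds"
    and e: "e 0 = m" "(\<lambda>i. e (Suc i)) = factor_ldeg ds"
    by (auto simp: c_def e_def d factor_tdeg_def factor_ldeg_def)
  let ?h = "length ds"
  let ?F = "\<lambda>f. sc (Lpow (ldeg (Suc ?h) e f)) (P (\<lambda>j. k j - tdeg (Suc ?h) c f j))"
  have "geom_prod sc (d # ds) P k = (\<Sum>l\<in>{l. \<forall>j. l * c 0 j \<le> k j}.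
      sc (Lpow (e 0) ^ l) (geom_prod sc ds P (\<lambda>j. k j - l * c 0 j)))"
    by (simp add: d geom_mul_def c(1) e(1))
  also have "\<dots> = (\<Sum>l\<in>{l. \<forall>j. l * c 0 j \<le> k j}. sc (Lpow (e 0) ^ l)
      (\<Sum>f\<in>mults_below ?h (\<lambda>i. c (Suc i)) (\<lambda>j. k j - l * c 0 j).
         sc (Lpow (ldeg ?h (\<lambda>i. e (Suc i)) f)) (P (\<lambda>j. (k j - l * c 0 j) - tdeg ?h (\<lambda>i. c (Suc i)) f j))))"
    by (intro sum.cong refl arg_cong[where f="sc _"]) (simp add: Cons.IH[OF ds] c(2) e(2))
  also have "\<dots> = (\<Sum>l\<in>{l. \<forall>j. l * c 0 j \<le> k j}.
      \<Sum>f\<in>mults_below ?h (\<lambda>i. c (Suc i)) (\<lambda>j. k j - l * c 0 j). ?F (case_nat l f))"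
    by (intro sum.cong refl)
      (simp add: module.scale_sum_right[OF sc] module.scale_scale[OF sc]
        Lpow_power Lpow_add[symmetric] ldeg_case_nat tdeg_case_nat diff_diff_left)
  also have "\<dots> = (\<Sum>(l, f)\<in>(SIGMA l:{l. \<forall>j. l * c 0 j \<le> k j}.
      mults_below ?h (\<lambda>i. c (Suc i)) (\<lambda>j. k j - l * c 0 j)). ?F (case_nat l f))"
    using finite_geom_index[OF n] finite_mults_of[OF ds] by (subst sum.Sigma) (auto simp: c)
  also have "\<dots> = (\<Sum>f\<in>mults_below (Suc ?h) c k. ?F f)"
    using sum.reindex_bij_betw[OF bij_betw_case_nat_mults_below, of ?F c k ?h]
    by (simp add: case_prod_unfold)
  finally show ?case by (simp add: c_def e_def)
qed

lemma module_self: "module ((*) :: 'a::comm_ring_1 \<Rightarrow> 'a \<Rightarrow> 'a)"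
  by standard (simp_all add: algebra_simps)

lemma geom_prod_scale_sum:
  fixes ds :: "(int \<times> ('r::finite \<Rightarrow> nat)) list"
  assumes sc: "module sc" and ds: "proper_factors ds" and "finite X"
  shows "geom_prod sc ds (\<lambda>k. \<Sum>x\<in>X. sc (F x k) (v x)) k = (\<Sum>x\<in>X. sc (geom_prod (*) ds (F x) k) (v x))"
proof -
  have "geom_prod sc ds (\<lambda>k. \<Sum>x\<in>X. sc (F x k) (v x)) k =
      (\<Sum>f\<in>mults_of ds k. \<Sum>x\<in>X. sc (Lpow (ldeg_of ds f) * F x (\<lambda>j. k j - tdeg_of ds f j)) (v x))"
    by (simp add: geom_prod_expand[OF sc ds] module.scale_sum_right[OF sc] module.scale_scale[OF sc])
  also have "\<dots> = (\<Sum>x\<in>X. \<Sum>f\<in>mults_of ds k. sc (Lpow (ldeg_of ds f) * F x (\<lambda>j. k j - tdeg_of ds f j)) (v x))"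
    by (rule sum.swap)
  also have "\<dots> = (\<Sum>x\<in>X. sc (geom_prod (*) ds (F x) k) (v x))"
    by (simp add: geom_prod_expand[OF module_self ds] module.scale_sum_left[OF sc])
  finally show ?thesis .
qed

lemma geom_prod_expand_support:
  fixes ds :: "(int \<times> ('r::finite \<Rightarrow> nat)) list"
  assumes sc: "module sc" and ds: "proper_factors ds" and "finite {u. P u \<noteq> 0}"
  shows "geom_prod sc ds P k = (\<Sum>u | P u \<noteq> 0.
     \<Sum>f | vanishes_from (length ds) f \<and> (\<lambda>j. u j + tdeg_of ds f j) = k. sc (Lpow (ldeg_of ds f)) (P u))"
proof -
  let ?U = "{u. P u \<noteq> 0}" and ?L = "\<lambda>f. Lpow (ldeg_of ds f)"
  have "geom_prod sc ds P k = (\<Sum>f\<in>mults_of ds k. sc (?L f) (P (\<lambda>j. k j - tdeg_of ds f j)))"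
    by (rule geom_prod_expand[OF sc ds])
  also have "\<dots> = (\<Sum>f\<in>mults_of ds k. \<Sum>u\<in>?U.
      if u = (\<lambda>j. k j - tdeg_of ds f j) then sc (?L f) (P u) else 0)"
  proof (intro sum.cong refl)
    fix f
    show "sc (?L f) (P (\<lambda>j. k j - tdeg_of ds f j)) =
        (\<Sum>u\<in>?U. if u = (\<lambda>j. k j - tdeg_of ds f j) then sc (?L f) (P u) else 0)"
      using assms(3) by (cases "P (\<lambda>j. k j - tdeg_of ds f j) = 0")
        (simp_all add: module.scale_zero_right[OF sc] sum.delta')
  qed
  also have "\<dots> = (\<Sum>u\<in>?U. \<Sum>f\<in>mults_of ds k. if u = (\<lambda>j. k j - tdeg_of ds f j) then sc (?L f) (P u) else 0)"
    by (rule sum.swap)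
  also have "\<dots> = (\<Sum>u\<in>?U. \<Sum>f | vanishes_from (length ds) f \<and> (\<lambda>j. u j + tdeg_of ds f j) = k. sc (?L f) (P u))"
  proof (rule sum.cong[OF refl])
    fix u
    have "{f\<in>mults_of ds k. u = (\<lambda>j. k j - tdeg_of ds f j)} =
        {f. vanishes_from (length ds) f \<and> (\<lambda>j. u j + tdeg_of ds f j) = k}"
      by (auto simp: mults_below_def fun_eq_iff) (metis le_add2, metis add_diff_cancel_right')+
    thus "(\<Sum>f\<in>mults_of ds k. if u = (\<lambda>j. k j - tdeg_of ds f j) then sc (?L f) (P u) else 0) =
      (\<Sum>f | vanishes_from (length ds) f \<and> (\<lambda>j. u j + tdeg_of ds f j) = k. sc (?L f) (P u))"
      by (simp add: sum.inter_filter[OF finite_mults_of[OF ds], symmetric])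
  qed
  finally show ?thesis .
qed

definition loc_series :: "(int \<times> ('r::finite \<Rightarrow> nat)) list \<Rightarrow> (('r \<Rightarrow> nat) \<Rightarrow> zloc) \<Rightarrow> bool" where
  "loc_series ds F \<longleftrightarrow> (\<exists>R. finite {k. R k \<noteq> 0} \<and> F = geom_prod (*) ds R)"

lemma loc_series_add:
  assumes ds: "proper_factors ds" and "loc_series ds F" "loc_series ds G"
  shows "loc_series ds (\<lambda>k. F k + G k)"
proof -
  obtain R R' where R: "finite {k. R k \<noteq> 0}" "F = geom_prod (*) ds R"
    and R': "finite {k. R' k \<noteq> 0}" "G = geom_prod (*) ds R'"
    using assms(2,3) by (auto simp: loc_series_def)
  have "finite {k. R k + R' k \<noteq> 0}"
    by (rule finite_subset[OF _ finite_UnI[OF R(1) R'(1)]]) auto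
  moreover have "(\<lambda>k. F k + G k) = geom_prod (*) ds (\<lambda>k. R k + R' k)"
    by (rule ext) (simp add: R(2) R'(2) geom_prod_expand[OF module_self ds] sum.distrib algebra_simps)
  ultimately show ?thesis unfolding loc_series_def by (intro exI[of _ "\<lambda>k. R k + R' k"]) simp
qed

lemma loc_series_zero: "proper_factors ds \<Longrightarrow> loc_series ds (\<lambda>k. 0)"
  unfolding loc_series_def by (rule exI[of _ "\<lambda>k. 0"]) (auto simp: geom_prod_expand[OF module_self])

lemma loc_series_sum:
  assumes ds: "proper_factors ds" and "\<And>x. x \<in> X \<Longrightarrow> loc_series ds (F x)"
  shows "loc_series ds (\<lambda>k. \<Sum>x\<in>X. F x k)"
  using assms(2)
  by (induction X rule: infinite_finite_induct) (simp_all add: loc_series_zero[OF ds] loc_series_add[OF ds])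

lemma loc_series_shift:
  fixes ds :: "(int \<times> ('r::finite \<Rightarrow> nat)) list"
  assumes ds: "proper_factors ds" and "loc_series ds F"
  shows "loc_series ds (\<lambda>k. if \<forall>j. v j \<le> k j then c * F (\<lambda>j. k j - v j) else 0)"
proof -
  obtain R where R: "finite {k. R k \<noteq> 0}" "F = geom_prod (*) ds R"
    using assms(2) by (auto simp: loc_series_def)
  define R' where "R' = (\<lambda>k. if \<forall>j. v j \<le> k j then c * R (\<lambda>j. k j - v j) else 0)"
  have "{k. R' k \<noteq> 0} \<subseteq> (\<lambda>k' j. k' j + v j) ` {k. R k \<noteq> 0}"
  proof
    fix k assume "k \<in> {k. R' k \<noteq> 0}"
    hence "\<forall>j. v j \<le> k j" "R (\<lambda>j. k j - v j) \<noteq> 0" by (auto simp: R'_def split: if_splits)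
    thus "k \<in> (\<lambda>k' j. k' j + v j) ` {k. R k \<noteq> 0}"
      by (intro image_eqI[where x="\<lambda>j. k j - v j"]) auto
  qed
  hence "finite {k. R' k \<noteq> 0}" using R(1) finite_subset by blast
  moreover have "(if \<forall>j. v j \<le> k j then c * F (\<lambda>j. k j - v j) else 0) = geom_prod (*) ds R' k" for k
  proof -
    let ?f_ok = "\<lambda>f. \<forall>j. v j \<le> k j - tdeg_of ds f j"
    have "geom_prod (*) ds R' k = (\<Sum>f\<in>mults_of ds k. Lpow (ldeg_of ds f) *
        (if ?f_ok f then c * R (\<lambda>j. k j - tdeg_of ds f j - v j) else 0))"
      by (simp add: geom_prod_expand[OF module_self ds] R'_def)
    also have "\<dots> = (\<Sum>f\<in>{f\<in>mults_of ds k. ?f_ok f}.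
        Lpow (ldeg_of ds f) * (c * R (\<lambda>j. k j - tdeg_of ds f j - v j)))"
      by (subst sum.inter_filter[OF finite_mults_of[OF ds]]) (auto intro!: sum.cong)
    also have "\<dots> = (if \<forall>j. v j \<le> k j then c * F (\<lambda>j. k j - v j) else 0)"
    proof (cases "\<forall>j. v j \<le> k j")
      case True
      have le_iff: "tdeg_of ds f j \<le> k j \<and> v j \<le> k j - tdeg_of ds f j \<longleftrightarrow> tdeg_of ds f j \<le> k j - v j"
        for f j using True[rule_format, of j] by arith
      have "{f\<in>mults_of ds k. ?f_ok f} = mults_of ds (\<lambda>j. k j - v j)"
        by (auto simp: mults_below_def le_iff[symmetric])
      thus ?thesis using True
        by (simp add: R(2) geom_prod_expand[OF module_self ds] sum_distrib_left algebra_simps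
            diff_diff_left add.commute)
    next
      case False
      hence "{f\<in>mults_of ds k. ?f_ok f} = {}"
        by (auto simp: mults_below_def) (meson diff_le_self le_trans)
      thus ?thesis using False by (simp only: sum.empty if_False)
    qed
    finally show ?thesis by simp
  qed
  ultimately show ?thesis unfolding loc_series_def by (intro exI[of _ R']) auto
qed

definition mult_genfun :: "(int \<times> ('r \<Rightarrow> nat)) list \<Rightarrow> (nat \<Rightarrow> nat) set \<Rightarrow> ('r \<Rightarrow> nat) \<Rightarrow> zloc" where
  "mult_genfun ds A k =
     (\<Sum>f | f \<in> A \<and> vanishes_from (length ds) f \<and> tdeg_of ds f = k. Lpow (ldeg_of ds f))"

lemma finite_mult_genfun_fiber:
  fixes ds :: "(int \<times> ('r::finite \<Rightarrow> nat)) list"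
  assumes "proper_factors ds"
  shows "finite {f. f \<in> A \<and> vanishes_from (length ds) f \<and> tdeg_of ds f = k}"
  by (rule finite_subset[OF _ finite_mults_of[OF assms, of k]]) (auto simp: mults_below_def)

lemma mult_genfun_cong:
  "(\<And>f. vanishes_from (length ds) f \<Longrightarrow> f \<in> A \<longleftrightarrow> f \<in> A') \<Longrightarrow> mult_genfun ds A = mult_genfun ds A'"
  unfolding mult_genfun_def by (intro ext sum.cong) auto

lemma loc_series_mult_genfun_UNIV:
  fixes ds :: "(int \<times> ('r::finite \<Rightarrow> nat)) list"
  assumes ds: "proper_factors ds"
  shows "loc_series ds (mult_genfun ds UNIV)"
proof -
  define R :: "('r \<Rightarrow> nat) \<Rightarrow> zloc" where "R = (\<lambda>k. if k = (\<lambda>_. 0) then 1 else 0)"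
  have "finite {k. R k \<noteq> 0}" by (rule finite_subset[of _ "{\<lambda>_. 0}"]) (auto simp: R_def)
  moreover have "mult_genfun ds UNIV k = geom_prod (*) ds R k" for k
  proof -
    have "{f\<in>mults_of ds k. (\<lambda>j. k j - tdeg_of ds f j) = (\<lambda>_. 0)} =
        {f. f \<in> UNIV \<and> vanishes_from (length ds) f \<and> tdeg_of ds f = k}"
      by (auto simp: mults_below_def fun_eq_iff intro: le_antisym)
    thus ?thesis
      by (simp add: geom_prod_expand[OF module_self ds] R_def mult_genfun_def if_distrib
          sum.inter_filter[OF finite_mults_of[OF ds], symmetric] cong: if_cong)
  qed
  ultimately show ?thesis unfolding loc_series_def by blast
qed

lemma mult_genfun_translate:
  assumes "vanishes_from (length ds) \<beta>"
  shows "mult_genfun ds {f. (\<forall>i. \<beta> i \<le> f i) \<and> (\<lambda>i. f i - \<beta> i) \<in> A} k =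
    (if \<forall>j. tdeg_of ds \<beta> j \<le> k j
     then Lpow (ldeg_of ds \<beta>) * mult_genfun ds A (\<lambda>j. k j - tdeg_of ds \<beta> j) else 0)"
proof (cases "\<forall>j. tdeg_of ds \<beta> j \<le> k j")
  case True
  let ?Fib = "\<lambda>A k. {f. f \<in> A \<and> vanishes_from (length ds) f \<and> tdeg_of ds f = k}"
  have "bij_betw (\<lambda>g i. \<beta> i + g i) (?Fib A (\<lambda>j. k j - tdeg_of ds \<beta> j))
      (?Fib {f. (\<forall>i. \<beta> i \<le> f i) \<and> (\<lambda>i. f i - \<beta> i) \<in> A} k)"
  proof (rule bij_betw_byWitness[where f' = "\<lambda>f i. f i - \<beta> i"])
    show "(\<lambda>g i. \<beta> i + g i) ` ?Fib A (\<lambda>j. k j - tdeg_of ds \<beta> j)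
        \<subseteq> ?Fib {f. (\<forall>i. \<beta> i \<le> f i) \<and> (\<lambda>i. f i - \<beta> i) \<in> A} k"
      using assms True by (auto simp: vanishes_from_def tdeg_add fun_eq_iff)
    show "(\<lambda>f i. f i - \<beta> i) ` ?Fib {f. (\<forall>i. \<beta> i \<le> f i) \<and> (\<lambda>i. f i - \<beta> i) \<in> A} k
        \<subseteq> ?Fib A (\<lambda>j. k j - tdeg_of ds \<beta> j)"
      using assms by (auto simp: vanishes_from_def tdeg_diff)
  qed auto
  hence "mult_genfun ds {f. (\<forall>i. \<beta> i \<le> f i) \<and> (\<lambda>i. f i - \<beta> i) \<in> A} k =
      (\<Sum>g\<in>?Fib A (\<lambda>j. k j - tdeg_of ds \<beta> j). Lpow (ldeg_of ds (\<lambda>i. \<beta> i + g i)))"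
    unfolding mult_genfun_def by (rule sum.reindex_bij_betw[symmetric])
  thus ?thesis using True by (simp add: mult_genfun_def ldeg_add Lpow_add sum_distrib_left)
next
  case False
  have "tdeg_of ds \<beta> j \<le> tdeg_of ds f j" if "\<forall>i. \<beta> i \<le> f i" for f j
    using that by (rule tdeg_mono)
  hence "{f. f \<in> {f. (\<forall>i. \<beta> i \<le> f i) \<and> (\<lambda>i. f i - \<beta> i) \<in> A} \<and>
      vanishes_from (length ds) f \<and> tdeg_of ds f = k} = {}"
    using False by auto
  thus ?thesis using False unfolding mult_genfun_def by (simp only: sum.empty if_False)
qed

definition not_above :: "(nat \<Rightarrow> nat) set \<Rightarrow> (nat \<Rightarrow> nat) set" where
  "not_above B = {f. \<not> (\<exists>\<beta>\<in>B. \<forall>i. \<beta> i \<le> f i)}"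

lemma not_above_empty [simp]: "not_above {} = UNIV"
  by (simp add: not_above_def)

text \<open>Inclusion-exclusion step: removing one generator \<open>\<beta>\<close> of the upset.\<close>

lemma mult_genfun_not_above_insert:
  fixes ds :: "(int \<times> ('r::finite \<Rightarrow> nat)) list"
  assumes ds: "proper_factors ds" and \<beta>: "vanishes_from (length ds) \<beta>"
  shows "mult_genfun ds (not_above (insert \<beta> B)) k = mult_genfun ds (not_above B) k +
    (if \<forall>j. tdeg_of ds \<beta> j \<le> k j
     then - Lpow (ldeg_of ds \<beta>) * mult_genfun ds (not_above ((\<lambda>\<gamma> i. \<gamma> i - \<beta> i) ` B))
        (\<lambda>j. k j - tdeg_of ds \<beta> j)
     else 0)"
proof -
  let ?A1 = "{f. (\<forall>i. \<beta> i \<le> f i) \<and> (\<lambda>i. f i - \<beta> i) \<in> not_above ((\<lambda>\<gamma> i. \<gamma> i - \<beta> i) ` B)}"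
  have A1: "?A1 = {f \<in> not_above B. \<forall>i. \<beta> i \<le> f i}"
    by (auto simp: not_above_def le_diff_conv)
  have "not_above (insert \<beta> B) = not_above B - ?A1"
    unfolding A1 by (auto simp: not_above_def)
  hence "mult_genfun ds (not_above (insert \<beta> B)) k = mult_genfun ds (not_above B) k - mult_genfun ds ?A1 k"
    unfolding mult_genfun_def A1
    by (subst sum_diff[OF finite_mult_genfun_fiber[OF ds], symmetric]) (auto intro!: sum.cong)
  thus ?thesis by (simp add: mult_genfun_translate[OF \<beta>])
qed

lemma loc_series_mult_genfun_not_above:
  fixes ds :: "(int \<times> ('r::finite \<Rightarrow> nat)) list"
  assumes ds: "proper_factors ds"
  shows "finite B \<Longrightarrow> \<forall>\<beta>\<in>B. vanishes_from (length ds) \<beta> \<Longrightarrow> loc_series ds (mult_genfun ds (not_above B))"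
proof (induction "card B" arbitrary: B rule: less_induct)
  case less
  show ?case
  proof (cases "B = {}")
    case True
    thus ?thesis using loc_series_mult_genfun_UNIV[OF ds] by simp
  next
    case False
    then obtain \<beta> where \<beta>: "\<beta> \<in> B" by blast
    define B0 where "B0 = B - {\<beta>}"
    have B: "B = insert \<beta> B0" using \<beta> by (auto simp: B0_def)
    have cB0: "card B0 < card B" unfolding B0_def using less.prems(1) \<beta> by (rule card_Diff1_less)
    define B1 where "B1 = (\<lambda>\<gamma> i. \<gamma> i - \<beta> i) ` B0"
    have "card B1 < card B"
      using card_image_le[of B0 "\<lambda>\<gamma> i. \<gamma> i - \<beta> i"] less.prems(1) cB0 by (simp add: B0_def B1_def)
    moreover have "finite B1" "\<forall>\<gamma>\<in>B1. vanishes_from (length ds) \<gamma>"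
      using less.prems by (auto simp: B0_def B1_def vanishes_from_def)
    ultimately have "loc_series ds (mult_genfun ds (not_above B1))"
      using less.hyps by blast
    moreover have "loc_series ds (mult_genfun ds (not_above B0))"
      using less.hyps[OF cB0] less.prems by (auto simp: B0_def)
    ultimately have "loc_series ds (\<lambda>k. mult_genfun ds (not_above B0) k +
        (if \<forall>j. tdeg_of ds \<beta> j \<le> k j
         then - Lpow (ldeg_of ds \<beta>) * mult_genfun ds (not_above B1) (\<lambda>j. k j - tdeg_of ds \<beta> j)
         else 0))"
      by (intro loc_series_add[OF ds] loc_series_shift[OF ds])
    moreover have "vanishes_from (length ds) \<beta>" using less.prems(2) \<beta> by blast
    hence "mult_genfun ds (not_above B) = (\<lambda>k. mult_genfun ds (not_above B0) k +
        (if \<forall>j. tdeg_of ds \<beta> j \<le> k j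
         then - Lpow (ldeg_of ds \<beta>) * mult_genfun ds (not_above B1) (\<lambda>j. k j - tdeg_of ds \<beta> j)
         else 0))"
      unfolding B B1_def by (intro ext mult_genfun_not_above_insert[OF ds])
    ultimately show ?thesis by simp
  qed
qed

section \<open>Generating functions of translated saturated monoids\<close>

lemma less_fun_total:
  fixes f g :: "nat \<Rightarrow> 'b::linorder"
  assumes "f \<noteq> g"
  shows "less_fun f g \<or> less_fun g f"
proof -
  define i where "i = (LEAST i. f i \<noteq> g i)"
  have "f i \<noteq> g i" unfolding i_def by (rule LeastI_ex) (use assms in auto)
  moreover have "\<forall>j<i. f j = g j" unfolding i_def using not_less_Least by blast
  ultimately show ?thesis by (auto simp: less_fun_def neq_iff)
qed

lemma less_fun_add_right: "less_fun f g \<Longrightarrow> less_fun (\<lambda>i. f i + t i) (\<lambda>i. g i + (t i :: nat))"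
  by (auto simp: less_fun_def)

lemma ex_less_fun_minimal:
  fixes A :: "(nat \<Rightarrow> 'b::linorder) set"
  shows "finite A \<Longrightarrow> A \<noteq> {} \<Longrightarrow> \<exists>m\<in>A. \<forall>a\<in>A. \<not> less_fun a m"
proof (induction A rule: finite_ne_induct)
  case (singleton x) thus ?case using less_fun_irrefl by auto
next
  case (insert x A)
  then obtain m where "m \<in> A" "\<forall>a\<in>A. \<not> less_fun a m" by blast
  thus ?case using less_fun_trans less_fun_irrefl by (cases "less_fun x m") blast+
qed

lemma tdeg_mem_submonoid:
  fixes M :: "('r \<Rightarrow> nat) set"
  assumes zero: "(\<lambda>_. 0) \<in> M" and add: "\<And>a b. a \<in> M \<Longrightarrow> b \<in> M \<Longrightarrow> (\<lambda>i. a i + b i) \<in> M"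
    and G: "\<forall>j<h. G j \<in> M"
  shows "tdeg h G f \<in> M"
  using G
proof (induction h)
  case 0 thus ?case using zero by (simp add: tdeg_def)
next
  case (Suc h)
  have Gh: "G h \<in> M" using Suc.prems by simp
  have "(\<lambda>i. n * G h i) \<in> M" for n
    by (induction n) (use zero add[OF Gh] in auto)
  moreover have "tdeg h G f \<in> M" using Suc by simp
  ultimately show ?case using add[of "tdeg h G f" "\<lambda>i. f h * G h i"]
    by (simp add: tdeg_def mult.commute)
qed

text \<open>Every \<open>z \<in> S\<close> is
  \<open>ms!\<sigma> + \<Sum>f\<^sub>j gs!j\<close>, and taking the lexicographically least \<open>(\<sigma>, f)\<close> makes this unique; the
  non-least representations form an upset, whose complement has a rational generating function.\<close>

locale monoid_coset =
  fixes d :: nat and K S :: "(nat \<Rightarrow> nat) set"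
    and c :: "nat \<Rightarrow> 'r::finite \<Rightarrow> nat" and e :: "nat \<Rightarrow> int"
    and gs ms :: "(nat \<Rightarrow> nat) list"
  assumes K_vanishes: "\<forall>z\<in>K. vanishes_from d z"
    and S_vanishes: "\<forall>z\<in>S. vanishes_from d z"
    and K_zero: "(\<lambda>_. 0) \<in> K"
    and K_add: "\<And>a b. a \<in> K \<Longrightarrow> b \<in> K \<Longrightarrow> (\<lambda>i. a i + b i) \<in> K"
    and K_diff: "\<And>a b. a \<in> K \<Longrightarrow> b \<in> K \<Longrightarrow> \<forall>i. a i \<le> b i \<Longrightarrow> (\<lambda>i. b i - a i) \<in> K"
    and S_add: "\<And>z a. z \<in> S \<Longrightarrow> a \<in> K \<Longrightarrow> (\<lambda>i. z i + a i) \<in> S"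
    and S_diff: "\<And>z z'. z \<in> S \<Longrightarrow> z' \<in> S \<Longrightarrow> \<forall>i. z i \<le> z' i \<Longrightarrow> (\<lambda>i. z' i - z i) \<in> K"
    and tdeg_K_nonzero: "\<And>a. a \<in> K \<Longrightarrow> a \<noteq> (\<lambda>_. 0) \<Longrightarrow> tdeg d c a \<noteq> (\<lambda>_. 0)"
    and set_gs: "set gs = minimal_elems (K - {\<lambda>_. 0})"
    and set_ms: "set ms = minimal_elems S"
begin

definition factors :: "(int \<times> ('r \<Rightarrow> nat)) list" where
  "factors = map (\<lambda>g. (ldeg d e g, tdeg d c g)) gs"

definition comb :: "(nat \<Rightarrow> nat) \<Rightarrow> nat \<Rightarrow> nat" where
  "comb f = tdeg (length gs) (nth gs) f"

definition elem :: "nat \<Rightarrow> (nat \<Rightarrow> nat) \<Rightarrow> nat \<Rightarrow> nat" where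
  "elem \<sigma> f = (\<lambda>i. (ms ! \<sigma>) i + comb f i)"

text \<open>A representation \<open>(\<sigma>, f)\<close> of \<open>elem \<sigma> f\<close> is encoded as the single vector \<open>case_nat \<sigma> f\<close>, so
  that the lexicographic order compares \<open>\<sigma>\<close> first.\<close>

definition reps :: "(nat \<Rightarrow> nat) \<Rightarrow> (nat \<Rightarrow> nat) set" where
  "reps z = {r. r 0 < length ms \<and> vanishes_from (Suc (length gs)) r \<and> elem (r 0) (\<lambda>i. r (Suc i)) = z}"

definition redundant :: "nat \<Rightarrow> (nat \<Rightarrow> nat) set" where
  "redundant \<sigma> = {f. vanishes_from (length gs) f \<and> (\<exists>r\<in>reps (elem \<sigma> f). less_fun r (case_nat \<sigma> f))}"

lemma gs_nth: "j < length gs \<Longrightarrow> gs ! j \<in> K \<and> gs ! j \<noteq> (\<lambda>_. 0)"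
  using nth_mem[of j gs] set_gs by (auto simp: minimal_elems_def)

lemma ms_nth: "\<sigma> < length ms \<Longrightarrow> ms ! \<sigma> \<in> S"
  using nth_mem[of \<sigma> ms] set_ms by (auto simp: minimal_elems_def)

lemma length_factors [simp]: "length factors = length gs"
  by (simp add: factors_def)

lemma proper_factors: "proper_factors factors"
  using gs_nth tdeg_K_nonzero set_gs
  by (auto simp: proper_factors_def factors_def minimal_elems_def)

lemma tdeg_comb: "tdeg d c (comb f) = tdeg_of factors f"
  unfolding comb_def tdeg_tdeg length_factors
  by (rule tdeg_cong) (simp add: factors_def factor_tdeg_def)

lemma ldeg_comb: "ldeg d e (comb f) = ldeg_of factors f"
  unfolding comb_def ldeg_tdeg length_factors
  by (rule ldeg_cong) (simp add: factors_def factor_ldeg_def)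

lemma comb_add: "comb (\<lambda>i. f i + g i) = (\<lambda>i. comb f i + comb g i)"
  by (simp add: comb_def tdeg_add)

lemma comb_in_K: "comb f \<in> K"
  unfolding comb_def by (rule tdeg_mem_submonoid[OF K_zero K_add]) (use gs_nth in auto)

text \<open>The minimal nonzero elements form a Hilbert basis of \<open>K\<close>: subtract one below \<open>\<kappa>\<close> and recurse.\<close>

lemma K_eq_comb: "\<kappa> \<in> K \<Longrightarrow> \<exists>f. vanishes_from (length gs) f \<and> \<kappa> = comb f"
proof (induction "\<Sum>i<d. \<kappa> i" arbitrary: \<kappa> rule: less_induct)
  case less
  show ?case
  proof (cases "\<kappa> = (\<lambda>_. 0)")
    case True
    thus ?thesis by (intro exI[of _ "\<lambda>_. 0"]) (simp add: vanishes_from_def comb_def)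
  next
    case False
    then obtain g where g: "g \<in> minimal_elems (K - {\<lambda>_. 0})" "\<forall>i. g i \<le> \<kappa> i"
      using ex_minimal_elem_below[of "K - {\<lambda>_. 0}" d \<kappa>] K_vanishes less.prems by blast
    then obtain j where j: "j < length gs" "g = gs ! j" using set_gs by (metis in_set_conv_nth)
    have gK: "g \<in> K" "g \<noteq> (\<lambda>_. 0)" using g(1) by (auto simp: minimal_elems_def)
    define \<kappa>' where "\<kappa>' = (\<lambda>i. \<kappa> i - g i)"
    have "\<kappa>' \<in> K" unfolding \<kappa>'_def using K_diff[OF gK(1) less.prems g(2)] .
    moreover have "(\<Sum>i<d. \<kappa>' i) < (\<Sum>i<d. \<kappa> i)"
    proof -
      have "0 < (\<Sum>i<d. g i)" using vanishes_from_sum_pos gK K_vanishes by blast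
      moreover have "(\<Sum>i<d. \<kappa>' i) + (\<Sum>i<d. g i) = (\<Sum>i<d. \<kappa> i)"
        unfolding \<kappa>'_def sum.distrib[symmetric] using g(2) by (intro sum.cong) auto
      ultimately show ?thesis by linarith
    qed
    ultimately obtain f where f: "vanishes_from (length gs) f" "\<kappa>' = comb f"
      using less.hyps by blast
    define f' where "f' = (\<lambda>i. f i + (if i = j then 1 else 0))"
    have "vanishes_from (length gs) f'" using f(1) j(1) by (auto simp: vanishes_from_def f'_def)
    moreover have "comb f' = (\<lambda>i. \<kappa>' i + g i)"
      using f(2) j by (simp add: f'_def comb_add comb_def tdeg_indicator)
    moreover have "(\<lambda>i. \<kappa>' i + g i) = \<kappa>" using g(2) by (auto simp: \<kappa>'_def)
    ultimately show ?thesis by auto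
  qed
qed

lemma elem_in_S: "\<sigma> < length ms \<Longrightarrow> elem \<sigma> f \<in> S"
  unfolding elem_def using S_add[OF ms_nth comb_in_K] .

lemma case_nat_in_reps: "\<sigma> < length ms \<Longrightarrow> vanishes_from (length gs) f \<Longrightarrow> case_nat \<sigma> f \<in> reps (elem \<sigma> f)"
  by (simp add: reps_def)

lemma reps_nonempty: "z \<in> S \<Longrightarrow> reps z \<noteq> {}"
proof -
  assume z: "z \<in> S"
  obtain m where m: "m \<in> minimal_elems S" "\<forall>i. m i \<le> z i"
    using ex_minimal_elem_below[OF S_vanishes z] by blast
  then obtain \<sigma> where \<sigma>: "\<sigma> < length ms" "m = ms ! \<sigma>" using set_ms by (metis in_set_conv_nth)
  have "m \<in> S" using m by (simp add: minimal_elems_def)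
  hence "(\<lambda>i. z i - m i) \<in> K" using S_diff z m(2) by blast
  then obtain f where f: "vanishes_from (length gs) f" "(\<lambda>i. z i - m i) = comb f"
    using K_eq_comb by blast
  have "elem \<sigma> f = z"
  proof
    fix i
    have "comb f i = z i - m i" using f(2) by metis
    thus "elem \<sigma> f i = z i" using m(2) \<sigma>(2) by (simp add: elem_def)
  qed
  thus ?thesis using case_nat_in_reps[OF \<sigma>(1) f(1)] by auto
qed

lemma finite_reps: "finite (reps z)"
proof -
  have "r i \<le> length ms + (\<Sum>i<d. z i)" if r: "r \<in> reps z" for r i
  proof (cases i)
    case 0 thus ?thesis using r by (simp add: reps_def)
  next
    case (Suc j)
    show ?thesis
    proof (cases "j < length gs")
      case False thus ?thesis using r Suc by (simp add: reps_def vanishes_from_def)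
    next
      case True
      obtain i0 where i0: "(gs ! j) i0 \<noteq> 0" using gs_nth[OF True] by (meson ext)
      have "i0 < d" using i0 K_vanishes gs_nth[OF True] unfolding vanishes_from_def by (meson not_le)
      have "r i \<le> r i * (gs ! j) i0" using i0 by simp
      also have "\<dots> \<le> comb (\<lambda>i. r (Suc i)) i0" unfolding comb_def Suc using True by (rule coeff_le_tdeg)
      also have "\<dots> \<le> z i0" using r by (auto simp: reps_def elem_def)
      also have "\<dots> \<le> (\<Sum>i<d. z i)" using \<open>i0 < d\<close> by (intro member_le_sum) auto
      finally show ?thesis by simp
    qed
  qed
  hence "reps z \<subseteq> {r. vanishes_from (Suc (length gs)) r \<and> (\<forall>i. r i \<le> length ms + (\<Sum>i<d. z i))}"
    by (auto simp: reps_def)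
  thus ?thesis using finite_vanishes_from_bounded finite_subset by fast
qed

text \<open>Adding \<open>t\<close> to a representation and to a lexicographically smaller one preserves both.\<close>

lemma redundant_upward:
  assumes f: "f \<in> redundant \<sigma>" and g: "vanishes_from (length gs) g" and le: "\<forall>i. f i \<le> g i"
  shows "g \<in> redundant \<sigma>"
proof -
  obtain r where r: "r \<in> reps (elem \<sigma> f)" "less_fun r (case_nat \<sigma> f)" using f by (auto simp: redundant_def)
  define t where "t = (\<lambda>i. g i - f i)"
  have gft: "g = (\<lambda>i. f i + t i)" using le by (auto simp: t_def)
  have t: "vanishes_from (length gs) t" using g by (auto simp: vanishes_from_def t_def)
  define r' where "r' = (\<lambda>i. r i + case_nat 0 t i)"
  have "elem (r' 0) (\<lambda>i. r' (Suc i)) = (\<lambda>i. elem (r 0) (\<lambda>i. r (Suc i)) i + comb t i)"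
    by (simp add: r'_def elem_def comb_add fun_eq_iff)
  also have "\<dots> = elem \<sigma> g" using r(1) by (simp add: reps_def elem_def gft comb_add fun_eq_iff)
  finally have "r' \<in> reps (elem \<sigma> g)"
    using r(1) t by (auto simp: reps_def r'_def vanishes_from_def split: nat.splits)
  moreover have "case_nat \<sigma> g = (\<lambda>i. case_nat \<sigma> f i + case_nat 0 t i)"
    by (auto simp: fun_eq_iff gft split: nat.splits)
  hence "less_fun r' (case_nat \<sigma> g)" unfolding r'_def using less_fun_add_right[OF r(2)] by simp
  ultimately show ?thesis using g by (auto simp: redundant_def)
qed


lemma bij_betw_elem_canonical:
  "bij_betw (\<lambda>(\<sigma>, f). elem \<sigma> f)
     (SIGMA \<sigma>:{..<length ms}. {f. vanishes_from (length gs) f \<and> f \<notin> redundant \<sigma>}) S"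
  unfolding bij_betw_def
proof
  show "inj_on (\<lambda>(\<sigma>, f). elem \<sigma> f)
      (SIGMA \<sigma>:{..<length ms}. {f. vanishes_from (length gs) f \<and> f \<notin> redundant \<sigma>})"
  proof (rule inj_onI, clarsimp)
    fix \<sigma> f \<sigma>' f'
    assume \<sigma>: "\<sigma> < length ms" "vanishes_from (length gs) f" "f \<notin> redundant \<sigma>"
      and \<sigma>': "\<sigma>' < length ms" "vanishes_from (length gs) f'" "f' \<notin> redundant \<sigma>'"
      and eq: "elem \<sigma> f = elem \<sigma>' f'"
    have "case_nat \<sigma> f \<in> reps (elem \<sigma>' f')" "case_nat \<sigma>' f' \<in> reps (elem \<sigma> f)"
      using case_nat_in_reps \<sigma> \<sigma>' eq by metis+
    hence "\<not> less_fun (case_nat \<sigma>' f') (case_nat \<sigma> f)" "\<not> less_fun (case_nat \<sigma> f) (case_nat \<sigma>' f')"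
      using \<sigma> \<sigma>' by (auto simp: redundant_def)
    hence "case_nat \<sigma> f = case_nat \<sigma>' f'" using less_fun_total by blast
    thus "\<sigma> = \<sigma>' \<and> f = f'"
      by (metis nat.case(1) nat.case(2) ext fun_cong)
  qed
  show "(\<lambda>(\<sigma>, f). elem \<sigma> f) `
      (SIGMA \<sigma>:{..<length ms}. {f. vanishes_from (length gs) f \<and> f \<notin> redundant \<sigma>}) = S"
  proof (intro equalityI subsetI)
    fix z assume "z \<in> (\<lambda>(\<sigma>, f). elem \<sigma> f) `
        (SIGMA \<sigma>:{..<length ms}. {f. vanishes_from (length gs) f \<and> f \<notin> redundant \<sigma>})"
    thus "z \<in> S" using elem_in_S by auto
  next
    fix z assume z: "z \<in> S"
    obtain r where r: "r \<in> reps z" "\<forall>r'\<in>reps z. \<not> less_fun r' r"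
      using ex_less_fun_minimal[OF finite_reps reps_nonempty[OF z]] by blast
    define f where "f = (\<lambda>i. r (Suc i))"
    have r_eq: "case_nat (r 0) f = r" by (auto simp: fun_eq_iff f_def split: nat.splits)
    have "elem (r 0) f = z" "r 0 < length ms" "vanishes_from (length gs) f"
      using r(1) by (auto simp: reps_def f_def vanishes_from_Suc_iff)
    moreover have "f \<notin> redundant (r 0)" using r(2) r_eq \<open>elem (r 0) f = z\<close> by (auto simp: redundant_def)
    ultimately show "z \<in> (\<lambda>(\<sigma>, f). elem \<sigma> f) `
        (SIGMA \<sigma>:{..<length ms}. {f. vanishes_from (length gs) f \<and> f \<notin> redundant \<sigma>})"
      by (intro image_eqI[of _ _ "(r 0, f)"]) auto
  qed
qed

lemma loc_series_canonical: "loc_series factors (mult_genfun factors (- redundant \<sigma>))"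
proof -
  have van: "\<forall>f\<in>redundant \<sigma>. vanishes_from (length gs) f" by (simp add: redundant_def)
  have eq: "mult_genfun factors (- redundant \<sigma>) =
      mult_genfun factors (not_above (minimal_elems (redundant \<sigma>)))"
  proof (rule mult_genfun_cong)
    fix f assume f: "vanishes_from (length factors) f"
    show "f \<in> - redundant \<sigma> \<longleftrightarrow> f \<in> not_above (minimal_elems (redundant \<sigma>))"
    proof
      show "f \<in> - redundant \<sigma> \<Longrightarrow> f \<in> not_above (minimal_elems (redundant \<sigma>))"
        using redundant_upward f by (auto simp: not_above_def minimal_elems_def)
      show "f \<in> not_above (minimal_elems (redundant \<sigma>)) \<Longrightarrow> f \<in> - redundant \<sigma>"
        using ex_minimal_elem_below[OF van] by (auto simp: not_above_def) (meson not_le)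
    qed
  qed
  show ?thesis
    unfolding eq using van finite_minimal_elems[OF van]
    by (intro loc_series_mult_genfun_not_above proper_factors) (auto simp: minimal_elems_def)
qed


lemma tdeg_elem: "tdeg d c (elem \<sigma> f) = (\<lambda>j. tdeg d c (ms ! \<sigma>) j + tdeg_of factors f j)"
  unfolding elem_def tdeg_add tdeg_comb ..

lemma ldeg_elem: "ldeg d e (elem \<sigma> f) = ldeg d e (ms ! \<sigma>) + ldeg_of factors f"
  unfolding elem_def ldeg_add ldeg_comb ..

lemma genfun_eq_sum_canonical:
  "(\<Sum>z | z \<in> S \<and> tdeg d c z = k. Lpow (ldeg d e z)) =
   (\<Sum>\<sigma><length ms. if \<forall>j. tdeg d c (ms ! \<sigma>) j \<le> k j
      then Lpow (ldeg d e (ms ! \<sigma>)) * mult_genfun factors (- redundant \<sigma>) (\<lambda>j. k j - tdeg d c (ms ! \<sigma>) j)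
      else 0)"
proof -
  let ?C = "\<lambda>\<sigma>. {f. vanishes_from (length gs) f \<and> f \<notin> redundant \<sigma> \<and> tdeg d c (elem \<sigma> f) = k}"
  let ?A = "SIGMA \<sigma>:{..<length ms}. {f. vanishes_from (length gs) f \<and> f \<notin> redundant \<sigma>}"
  have "bij_betw (\<lambda>(\<sigma>, f). elem \<sigma> f) {x \<in> ?A. (\<lambda>(\<sigma>, f). tdeg d c (elem \<sigma> f) = k) x}
      {z \<in> S. tdeg d c z = k}"
    by (rule bij_betw_Collect[OF bij_betw_elem_canonical]) auto
  moreover have "{x \<in> ?A. (\<lambda>(\<sigma>, f). tdeg d c (elem \<sigma> f) = k) x} = (SIGMA \<sigma>:{..<length ms}. ?C \<sigma>)"
    by auto
  ultimately have bij: "bij_betw (\<lambda>(\<sigma>, f). elem \<sigma> f) (SIGMA \<sigma>:{..<length ms}. ?C \<sigma>) {z \<in> S. tdeg d c z = k}"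
    by simp
  have fin: "finite (?C \<sigma>)" for \<sigma>
    by (rule finite_subset[OF _ finite_mults_of[OF proper_factors, of k]])
      (auto simp: mults_below_def tdeg_elem)
  have "(\<Sum>z | z \<in> S \<and> tdeg d c z = k. Lpow (ldeg d e z)) =
      (\<Sum>(\<sigma>, f)\<in>(SIGMA \<sigma>:{..<length ms}. ?C \<sigma>). Lpow (ldeg d e (elem \<sigma> f)))"
    using sum.reindex_bij_betw[OF bij, of "\<lambda>z. Lpow (ldeg d e z)"] by (simp add: case_prod_unfold)
  also have "\<dots> = (\<Sum>\<sigma><length ms. \<Sum>f\<in>?C \<sigma>. Lpow (ldeg d e (elem \<sigma> f)))"
    using fin by (subst sum.Sigma) auto
  also have "\<dots> = (\<Sum>\<sigma><length ms. if \<forall>j. tdeg d c (ms ! \<sigma>) j \<le> k j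
      then Lpow (ldeg d e (ms ! \<sigma>)) * mult_genfun factors (- redundant \<sigma>) (\<lambda>j. k j - tdeg d c (ms ! \<sigma>) j)
      else 0)"
  proof (rule sum.cong[OF refl])
    fix \<sigma>
    show "(\<Sum>f\<in>?C \<sigma>. Lpow (ldeg d e (elem \<sigma> f))) = (if \<forall>j. tdeg d c (ms ! \<sigma>) j \<le> k j
      then Lpow (ldeg d e (ms ! \<sigma>)) * mult_genfun factors (- redundant \<sigma>) (\<lambda>j. k j - tdeg d c (ms ! \<sigma>) j)
      else 0)"
    proof (cases "\<forall>j. tdeg d c (ms ! \<sigma>) j \<le> k j")
      case True
      have "?C \<sigma> = {f. f \<in> - redundant \<sigma> \<and> vanishes_from (length factors) f \<and>
          tdeg_of factors f = (\<lambda>j. k j - tdeg d c (ms ! \<sigma>) j)}"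
        using True by (auto simp: tdeg_elem fun_eq_iff) (metis add_diff_cancel_left')
      thus ?thesis using True
        by (simp add: mult_genfun_def ldeg_elem Lpow_add sum_distrib_left)
    next
      case False
      hence "?C \<sigma> = {}" by (auto simp: tdeg_elem fun_eq_iff) (metis le_add1)
      thus ?thesis using False by (simp only: sum.empty if_False)
    qed
  qed
  finally show ?thesis .
qed

theorem loc_series_genfun:
  "loc_series factors (\<lambda>k. \<Sum>z | z \<in> S \<and> tdeg d c z = k. Lpow (ldeg d e z))"
  unfolding genfun_eq_sum_canonical
  by (intro loc_series_sum loc_series_shift loc_series_canonical proper_factors)

end

section \<open>Hadamard products\<close>

lemma sum_lessThan_add: "(\<Sum>i<(p::nat) + q. F i) = (\<Sum>i<p. F i) + (\<Sum>i<q. F (p + i) :: 'a::comm_monoid_add)"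
  by (induction q) (simp_all add: add.assoc)

definition concat_vec :: "nat \<Rightarrow> (nat \<Rightarrow> 'a) \<Rightarrow> (nat \<Rightarrow> 'a) \<Rightarrow> nat \<Rightarrow> 'a" where
  "concat_vec p f g = (\<lambda>i. if i < p then f i else g (i - p))"

definition take_vec :: "nat \<Rightarrow> (nat \<Rightarrow> nat) \<Rightarrow> nat \<Rightarrow> nat" where
  "take_vec p z = (\<lambda>i. if i < p then z i else 0)"

definition drop_vec :: "nat \<Rightarrow> (nat \<Rightarrow> 'a) \<Rightarrow> nat \<Rightarrow> 'a" where
  "drop_vec p z = (\<lambda>i. z (p + i))"

lemma concat_take_drop [simp]: "concat_vec p (take_vec p z) (drop_vec p z) = z"
  by (auto simp: concat_vec_def take_vec_def drop_vec_def fun_eq_iff)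

lemma take_concat [simp]: "vanishes_from p f \<Longrightarrow> take_vec p (concat_vec p f g) = f"
  by (auto simp: vanishes_from_def take_vec_def concat_vec_def fun_eq_iff)

lemma drop_concat [simp]: "drop_vec p (concat_vec p f g) = g"
  by (auto simp: drop_vec_def concat_vec_def fun_eq_iff)

lemma vanishes_from_take [simp]: "vanishes_from p (take_vec p z)"
  by (simp add: vanishes_from_def take_vec_def)

lemma vanishes_from_drop: "vanishes_from (p + q) z \<Longrightarrow> vanishes_from q (drop_vec p z)"
  by (simp add: vanishes_from_def drop_vec_def)

lemma vanishes_from_concat: "vanishes_from q g \<Longrightarrow> vanishes_from (p + q) (concat_vec p f g)"
  by (auto simp: vanishes_from_def concat_vec_def)

lemma tdeg_split:
  "tdeg (p + q) C z = (\<lambda>j. tdeg p C (take_vec p z) j + tdeg q (drop_vec p C) (drop_vec p z) j)"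
  unfolding tdeg_def take_vec_def drop_vec_def by (rule ext) (simp add: sum_lessThan_add)

lemma ldeg_split: "ldeg (p + q) E z = ldeg p E (take_vec p z) + ldeg q (drop_vec p E) (drop_vec p z)"
  unfolding ldeg_def take_vec_def drop_vec_def by (simp add: sum_lessThan_add)

lemma tdeg_concat_zero_right: "tdeg (p + q) (concat_vec p C (\<lambda>_ _. 0)) z = tdeg p C (take_vec p z)"
  unfolding tdeg_split by (simp add: drop_vec_def concat_vec_def tdeg_def cong: tdeg_cong)

lemma tdeg_concat_zero_left: "tdeg (p + q) (concat_vec p (\<lambda>_ _. 0) D) z = tdeg q D (drop_vec p z)"
  unfolding tdeg_split by (simp add: drop_vec_def concat_vec_def tdeg_def cong: tdeg_cong)

lemma ldeg_concat: "ldeg (p + q) (concat_vec p E F) z = ldeg p E (take_vec p z) + ldeg q F (drop_vec p z)"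
  unfolding ldeg_split by (simp add: drop_vec_def concat_vec_def ldeg_def)

definition coincidence ::
  "nat \<Rightarrow> (nat \<Rightarrow> 'r \<Rightarrow> nat) \<Rightarrow> (nat \<Rightarrow> 'r \<Rightarrow> nat) \<Rightarrow> ('r \<Rightarrow> nat) \<Rightarrow> ('r \<Rightarrow> nat) \<Rightarrow> (nat \<Rightarrow> nat) set" where
  "coincidence d c1 c2 u w =
     {z. vanishes_from d z \<and> (\<lambda>j. u j + tdeg d c1 z j) = (\<lambda>j. w j + tdeg d c2 z j)}"

lemma monoid_coset_coincidence:
  fixes d :: nat and c1 c2 :: "nat \<Rightarrow> 'r::finite \<Rightarrow> nat"
  defines "K \<equiv> coincidence d c1 c2 (\<lambda>_. 0) (\<lambda>_. 0)"
  assumes zero: "\<And>z. vanishes_from d z \<Longrightarrow> tdeg d c1 z = (\<lambda>_. 0) \<Longrightarrow> tdeg d c2 z = (\<lambda>_. 0) \<Longrightarrow> z = (\<lambda>_. 0)"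
    and "set gs = minimal_elems (K - {\<lambda>_. 0})" and "set ms = minimal_elems (coincidence d c1 c2 u w)"
  shows "monoid_coset d K (coincidence d c1 c2 u w) c1 gs ms"
proof
  show "(\<lambda>i. z' i - z i) \<in> K"
    if z: "z \<in> coincidence d c1 c2 u w" and z': "z' \<in> coincidence d c1 c2 u w" and le: "\<forall>i. z i \<le> z' i"
    for z z'
  proof -
    have "tdeg d c1 z' j - tdeg d c1 z j = tdeg d c2 z' j - tdeg d c2 z j" for j
      using z z' tdeg_mono[OF le, of d c1 j] tdeg_mono[OF le, of d c2 j]
      by (auto simp: coincidence_def fun_eq_iff) (metis add_diff_cancel_left)
    thus ?thesis using z z' le by (auto simp: K_def coincidence_def vanishes_from_def tdeg_diff fun_eq_iff)
  qed
  show "tdeg d c1 a \<noteq> (\<lambda>_. 0)" if "a \<in> K" "a \<noteq> (\<lambda>_. 0)" for a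
    using that zero by (auto simp: K_def coincidence_def)
qed (use assms in \<open>auto simp: K_def coincidence_def vanishes_from_def tdeg_add tdeg_diff fun_eq_iff\<close>)

definition hadamard_coeff ::
  "(int \<times> ('r \<Rightarrow> nat)) list \<Rightarrow> (int \<times> ('r \<Rightarrow> nat)) list \<Rightarrow> ('r \<Rightarrow> nat) \<Rightarrow> ('r \<Rightarrow> nat) \<Rightarrow> ('r \<Rightarrow> nat) \<Rightarrow> zloc" where
  "hadamard_coeff dsA dsB u w k =
     (\<Sum>(f, g) | vanishes_from (length dsA) f \<and> vanishes_from (length dsB) g \<and>
         (\<lambda>j. u j + tdeg_of dsA f j) = k \<and> (\<lambda>j. w j + tdeg_of dsB g j) = k.
       Lpow (ldeg_of dsA f + ldeg_of dsB g))"

lemma bilinear_geom_prod: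
  fixes dsA dsB :: "(int \<times> ('r::finite \<Rightarrow> nat)) list"
  assumes mM: "module sM" and mN: "module sN" and mP: "module sP"
    and t: "zloc_bilinear sM sN sP t"
    and A: "proper_factors dsA" and B: "proper_factors dsB"
    and P: "finite {u. P u \<noteq> 0}" and Q: "finite {w. Q w \<noteq> 0}"
  shows "t (geom_prod sM dsA P k) (geom_prod sN dsB Q k) =
    (\<Sum>u | P u \<noteq> 0. \<Sum>w | Q w \<noteq> 0. sP (hadamard_coeff dsA dsB u w k) (t (P u) (Q w)))"
proof -
  have hom1: "module_hom sM sP (\<lambda>x. t x y)" and hom2: "module_hom sN sP (t x)" for x y
    using t by (simp_all add: zloc_bilinear_def)
  define FA where "FA = (\<lambda>u. {f. vanishes_from (length dsA) f \<and> (\<lambda>j. u j + tdeg_of dsA f j) = k})"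
  define FB where "FB = (\<lambda>w. {g. vanishes_from (length dsB) g \<and> (\<lambda>j. w j + tdeg_of dsB g j) = k})"
  let ?L = "\<lambda>f g. Lpow (ldeg_of dsA f) * Lpow (ldeg_of dsB g)"
  have coeff: "hadamard_coeff dsA dsB u w k = (\<Sum>f\<in>FA u. \<Sum>g\<in>FB w. ?L f g)" for u w
  proof -
    have "{(f, g). vanishes_from (length dsA) f \<and> vanishes_from (length dsB) g \<and>
        (\<lambda>j. u j + tdeg_of dsA f j) = k \<and> (\<lambda>j. w j + tdeg_of dsB g j) = k} = FA u \<times> FB w"
      by (auto simp: FA_def FB_def)
    thus ?thesis by (simp add: hadamard_coeff_def sum.cartesian_product Lpow_add split_beta)
  qed
  have tb: "t x (geom_prod sN dsB Q k) =
      (\<Sum>w | Q w \<noteq> 0. \<Sum>g\<in>FB w. sP (Lpow (ldeg_of dsB g)) (t x (Q w)))" for x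
    by (simp add: geom_prod_expand_support[OF mN B Q] FB_def
        module_hom.sum[OF hom2] module_hom.scale[OF hom2])
  have "t (geom_prod sM dsA P k) (geom_prod sN dsB Q k) =
      (\<Sum>u | P u \<noteq> 0. \<Sum>f\<in>FA u. sP (Lpow (ldeg_of dsA f)) (t (P u) (geom_prod sN dsB Q k)))"
    by (simp add: geom_prod_expand_support[OF mM A P] FA_def
        module_hom.sum[OF hom1] module_hom.scale[OF hom1])
  also have "\<dots> = (\<Sum>u | P u \<noteq> 0. \<Sum>f\<in>FA u. \<Sum>w | Q w \<noteq> 0. \<Sum>g\<in>FB w. sP (?L f g) (t (P u) (Q w)))"
    by (simp add: tb module.scale_sum_right[OF mP] module.scale_scale[OF mP])
  also have "\<dots> = (\<Sum>u | P u \<noteq> 0. \<Sum>w | Q w \<noteq> 0. \<Sum>f\<in>FA u. \<Sum>g\<in>FB w. sP (?L f g) (t (P u) (Q w)))"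
    by (rule sum.cong[OF refl]) (rule sum.swap)
  also have "\<dots> = (\<Sum>u | P u \<noteq> 0. \<Sum>w | Q w \<noteq> 0. sP (hadamard_coeff dsA dsB u w k) (t (P u) (Q w)))"
    by (simp add: coeff module.scale_sum_left[OF mP])
  finally show ?thesis .
qed

lemma hadamard_coeff_eq_coincidence:
  fixes dsA dsB :: "(int \<times> ('r::finite \<Rightarrow> nat)) list"
  defines "d \<equiv> length dsA + length dsB"
    and "c1 \<equiv> concat_vec (length dsA) (factor_tdeg dsA) (\<lambda>_ _. 0)"
    and "c2 \<equiv> concat_vec (length dsA) (\<lambda>_ _. 0) (factor_tdeg dsB)"
    and "e \<equiv> concat_vec (length dsA) (factor_ldeg dsA) (factor_ldeg dsB)"
  shows "hadamard_coeff dsA dsB u w k =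
    (if \<forall>j. u j \<le> k j
     then 1 * (\<Sum>z | z \<in> coincidence d c1 c2 u w \<and> tdeg d c1 z = (\<lambda>j. k j - u j). Lpow (ldeg d e z))
     else 0)"
proof -
  have tdeg1: "tdeg d c1 z = tdeg_of dsA (take_vec (length dsA) z)" for z
    unfolding d_def c1_def by (rule tdeg_concat_zero_right)
  have tdeg2: "tdeg d c2 z = tdeg_of dsB (drop_vec (length dsA) z)" for z
    unfolding d_def c2_def by (rule tdeg_concat_zero_left)
  have ldeg: "ldeg d e z = ldeg_of dsA (take_vec (length dsA) z) + ldeg_of dsB (drop_vec (length dsA) z)" for z
    unfolding d_def e_def by (rule ldeg_concat)
  have van_concat: "vanishes_from (length dsB) g \<Longrightarrow> vanishes_from d (concat_vec (length dsA) f g)" for f g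
    unfolding d_def by (rule vanishes_from_concat)
  have van_drop: "vanishes_from d z \<Longrightarrow> vanishes_from (length dsB) (drop_vec (length dsA) z)" for z
    unfolding d_def by (rule vanishes_from_drop)
  let ?Z = "{z. vanishes_from d z \<and> (\<lambda>j. u j + tdeg d c1 z j) = k \<and> (\<lambda>j. w j + tdeg d c2 z j) = k}"
  have "bij_betw (\<lambda>(f, g). concat_vec (length dsA) f g)
      {(f, g). vanishes_from (length dsA) f \<and> vanishes_from (length dsB) g \<and>
         (\<lambda>j. u j + tdeg_of dsA f j) = k \<and> (\<lambda>j. w j + tdeg_of dsB g j) = k} ?Z"
    by (rule bij_betw_byWitness[where f' = "\<lambda>z. (take_vec (length dsA) z, drop_vec (length dsA) z)"])
      (auto simp: tdeg1 tdeg2 van_concat van_drop)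
  hence "hadamard_coeff dsA dsB u w k = (\<Sum>z\<in>?Z. Lpow (ldeg d e z))"
    unfolding hadamard_coeff_def
    by (subst sum.reindex_bij_betw[symmetric]) (auto simp: ldeg split_beta intro!: sum.cong)
  also have "\<dots> = (if \<forall>j. u j \<le> k j
     then 1 * (\<Sum>z | z \<in> coincidence d c1 c2 u w \<and> tdeg d c1 z = (\<lambda>j. k j - u j). Lpow (ldeg d e z))
     else 0)"
  proof (cases "\<forall>j. u j \<le> k j")
    case True
    hence "?Z = {z. z \<in> coincidence d c1 c2 u w \<and> tdeg d c1 z = (\<lambda>j. k j - u j)}"
      by (auto simp: coincidence_def fun_eq_iff) (metis add_diff_cancel_left')+
    thus ?thesis using True by simp
  next
    case False
    hence "?Z = {}" by (auto simp: fun_eq_iff) (metis le_add1)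
    thus ?thesis using False by (simp only: sum.empty if_False)
  qed
  finally show ?thesis .
qed

lemma eq_0_if_tdeg_of_eq_0:
  assumes "proper_factors ds" "vanishes_from (length ds) f" "tdeg_of ds f = (\<lambda>_. 0)"
  shows "f = (\<lambda>_. 0)"
proof
  fix i show "f i = 0"
    using assms tdeg_eq_0_imp[OF assms(3) _ proper_factors_nth[OF assms(1)]]
    by (cases "i < length ds") (auto simp: vanishes_from_def)
qed

lemma eq_0_if_tdeg_of_take_drop_eq_0:
  assumes "proper_factors dsA" "proper_factors dsB" "vanishes_from (length dsA + length dsB) z"
    and "tdeg_of dsA (take_vec (length dsA) z) = (\<lambda>_. 0)" "tdeg_of dsB (drop_vec (length dsA) z) = (\<lambda>_. 0)"
  shows "z = (\<lambda>_. 0)"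
proof -
  have "take_vec (length dsA) z = (\<lambda>_. 0)"
    using assms(1,4) by (rule eq_0_if_tdeg_of_eq_0[OF _ vanishes_from_take])
  moreover have "drop_vec (length dsA) z = (\<lambda>_. 0)"
    using assms(2,5) by (rule eq_0_if_tdeg_of_eq_0[OF _ vanishes_from_drop[OF assms(3)]])
  ultimately show ?thesis using concat_take_drop[of "length dsA" z] by (simp add: concat_vec_def)
qed

lemma ldeg_of_take_drop_neg:
  assumes "\<forall>(m, n)\<in>set dsA. m < 0" "\<forall>(m, n)\<in>set dsB. m \<le> 0" "take_vec (length dsA) z \<noteq> (\<lambda>_. 0)"
  shows "ldeg_of dsA (take_vec (length dsA) z) + ldeg_of dsB (drop_vec (length dsA) z) < 0"
proof -
  obtain i where i: "take_vec (length dsA) z i \<noteq> 0" using assms(3) by auto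
  hence "i < length dsA" by (simp add: take_vec_def split: if_splits)
  hence "ldeg_of dsA (take_vec (length dsA) z) < 0"
    using assms(1) i by (intro ldeg_neg) (auto simp: factor_ldeg_def dest!: nth_mem)
  moreover have "ldeg_of dsB (drop_vec (length dsA) z) \<le> 0"
    using assms(2) by (intro ldeg_nonpos) (auto simp: factor_ldeg_def dest!: nth_mem)
  ultimately show ?thesis by simp
qed

lemma hadamard_coeff_loc_series:
  fixes dsA dsB :: "(int \<times> ('r::finite \<Rightarrow> nat)) list"
  assumes A: "proper_factors dsA" "\<forall>(m, n)\<in>set dsA. m < 0"
    and B: "proper_factors dsB" "\<forall>(m, n)\<in>set dsB. m \<le> 0"
  obtains ds where "proper_factors ds" "\<forall>(m, n)\<in>set ds. m < 0"
    "\<And>u w. loc_series ds (hadamard_coeff dsA dsB u w)"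
proof -
  define d where "d = length dsA + length dsB"
  define c1 where "c1 = concat_vec (length dsA) (factor_tdeg dsA) (\<lambda>_ _. 0)"
  define c2 where "c2 = concat_vec (length dsA) (\<lambda>_ _. 0) (factor_tdeg dsB)"
  define e where "e = concat_vec (length dsA) (factor_ldeg dsA) (factor_ldeg dsB)"
  define S where "S = coincidence d c1 c2"
  have tdeg1: "tdeg d c1 z = tdeg_of dsA (take_vec (length dsA) z)" for z
    unfolding d_def c1_def by (rule tdeg_concat_zero_right)
  have tdeg2: "tdeg d c2 z = tdeg_of dsB (drop_vec (length dsA) z)" for z
    unfolding d_def c2_def by (rule tdeg_concat_zero_left)
  have zero: "z = (\<lambda>_. 0)"
    if "vanishes_from d z" "tdeg d c1 z = (\<lambda>_. 0)" "tdeg d c2 z = (\<lambda>_. 0)" for z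
    by (rule eq_0_if_tdeg_of_take_drop_eq_0[OF A(1) B(1)]) (use that in \<open>simp_all add: tdeg1 tdeg2 flip: d_def\<close>)
  have neg: "ldeg d e z < 0" if z: "z \<in> S (\<lambda>_. 0) (\<lambda>_. 0)" "z \<noteq> (\<lambda>_. 0)" for z
  proof -
    have "tdeg d c1 z \<noteq> (\<lambda>_. 0)" using z zero by (auto simp: S_def coincidence_def)
    hence "take_vec (length dsA) z \<noteq> (\<lambda>_. 0)" by (auto simp: tdeg1)
    thus ?thesis unfolding d_def e_def ldeg_concat by (rule ldeg_of_take_drop_neg[OF A(2) B(2)])
  qed
  have van: "\<forall>z\<in>S u w. vanishes_from d z" for u w by (simp add: S_def coincidence_def)
  have "finite (minimal_elems (S (\<lambda>_. 0) (\<lambda>_. 0) - {\<lambda>_. 0}))"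
    by (rule finite_minimal_elems[of _ d]) (use van in blast)
  then obtain gs where gs: "set gs = minimal_elems (S (\<lambda>_. 0) (\<lambda>_. 0) - {\<lambda>_. 0})"
    using finite_list by blast
  define ms where "ms u w = (SOME ms. set ms = minimal_elems (S u w))" for u w
  have ms: "set (ms u w) = minimal_elems (S u w)" for u w
    unfolding ms_def by (rule someI_ex, rule finite_list, rule finite_minimal_elems[OF van])
  have coset: "monoid_coset d (S (\<lambda>_. 0) (\<lambda>_. 0)) (S u w) c1 gs (ms u w)" for u w
    unfolding S_def by (rule monoid_coset_coincidence[OF zero gs[unfolded S_def] ms[unfolded S_def]])
  show thesis
  proof
    show "proper_factors (monoid_coset.factors d c1 e gs)"
      using monoid_coset.proper_factors[OF coset] .
    show "\<forall>(m, n)\<in>set (monoid_coset.factors d c1 e gs). m < 0"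
      using gs neg by (auto simp: monoid_coset.factors_def[OF coset] minimal_elems_def)
    fix u w
    have "hadamard_coeff dsA dsB u w = (\<lambda>k. if \<forall>j. u j \<le> k j
        then 1 * (\<Sum>z | z \<in> S u w \<and> tdeg d c1 z = (\<lambda>j. k j - u j). Lpow (ldeg d e z)) else 0)"
      unfolding S_def d_def c1_def c2_def e_def by (rule ext hadamard_coeff_eq_coincidence)+
    thus "loc_series (monoid_coset.factors d c1 e gs) (hadamard_coeff dsA dsB u w)"
      using loc_series_shift[OF monoid_coset.proper_factors[OF coset[of u w], where e = e]
          monoid_coset.loc_series_genfun[OF coset[of u w], where e = e], where v = u and c = 1]
      by simp
  qed
qed

lemma geom_prod_scale_sum_loc_series:
  fixes ds :: "(int \<times> ('r::finite \<Rightarrow> nat)) list"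
  assumes sc: "module sc" and ds: "proper_factors ds" and X: "finite X"
    and F: "\<And>x. x \<in> X \<Longrightarrow> loc_series ds (F x)"
  shows "\<exists>R. finite {k. R k \<noteq> 0} \<and> (\<lambda>k. \<Sum>x\<in>X. sc (F x k) (v x)) = geom_prod sc ds R"
proof -
  have "\<forall>x\<in>X. \<exists>R. finite {k. R k \<noteq> 0} \<and> F x = geom_prod (*) ds R"
    using F by (simp add: loc_series_def)
  from bchoice[OF this] obtain R
    where R: "\<forall>x\<in>X. finite {k. R x k \<noteq> 0} \<and> F x = geom_prod (*) ds (R x)" ..
  define T where "T k = (\<Sum>x\<in>X. sc (R x k) (v x))" for k
  have "{k. T k \<noteq> 0} \<subseteq> (\<Union>x\<in>X. {k. R x k \<noteq> 0})"
  proof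
    fix k assume "k \<in> {k. T k \<noteq> 0}"
    hence "(\<Sum>x\<in>X. sc (R x k) (v x)) \<noteq> 0" by (simp add: T_def)
    then obtain x where x: "x \<in> X" "sc (R x k) (v x) \<noteq> 0"
      using sum.neutral[of X "\<lambda>x. sc (R x k) (v x)"] by blast
    hence "R x k \<noteq> 0" using module.scale_zero_left[OF sc] by auto
    thus "k \<in> (\<Union>x\<in>X. {k. R x k \<noteq> 0})" using x(1) by blast
  qed
  moreover have "finite (\<Union>x\<in>X. {k. R x k \<noteq> 0})" by (intro finite_UN_I X) (use R in blast)
  ultimately have "finite {k. T k \<noteq> 0}" by (rule finite_subset)
  moreover have "(\<lambda>k. \<Sum>x\<in>X. sc (F x k) (v x)) = geom_prod sc ds T"
    unfolding T_def geom_prod_scale_sum[OF sc ds X] using R by simp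
  ultimately show ?thesis by (intro exI[of _ T] conjI)
qed

theorem lemma5p1:
  fixes sM :: "zloc \<Rightarrow> 'm::ab_group_add \<Rightarrow> 'm"
    and sN :: "zloc \<Rightarrow> 'n::ab_group_add \<Rightarrow> 'n"
    and sP :: "zloc \<Rightarrow> 'p::ab_group_add \<Rightarrow> 'p"
    and t :: "'m \<Rightarrow> 'n \<Rightarrow> 'p"
    and a :: "('r::finite \<Rightarrow> nat) \<Rightarrow> 'm"
    and b :: "('r \<Rightarrow> nat) \<Rightarrow> 'n"
  assumes "module sM" and "module sN" and "module sP"
    and "zloc_bilinear sM sN sP t"
    and "is_int sM a" and "is_ssr sN b"
  shows "is_int sP (\<lambda>k. t (a k) (b k))"
proof -
  obtain P dsA where P: "finite {u. P u \<noteq> 0}" and dsA: "\<forall>(m, n)\<in>set dsA. m < 0 \<and> n \<noteq> (\<lambda>_. 0)"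
    and a: "a = geom_prod sM dsA P"
    using assms(5) by (auto simp: is_int_def localized_series_def)
  obtain Q dsB where Q: "finite {w. Q w \<noteq> 0}" and dsB: "\<forall>(m, n)\<in>set dsB. m \<le> 0 \<and> n \<noteq> (\<lambda>_. 0)"
    and b: "b = geom_prod sN dsB Q"
    using assms(6) by (auto simp: is_ssr_def localized_series_def)
  have A: "proper_factors dsA" and B: "proper_factors dsB"
    using dsA dsB by (auto simp: proper_factors_def)
  have "\<forall>(m, n)\<in>set dsA. m < 0" "\<forall>(m, n)\<in>set dsB. m \<le> 0" using dsA dsB by auto
  then obtain ds where ds: "proper_factors ds" "\<forall>(m, n)\<in>set ds. m < 0"
    and H: "\<And>u w. loc_series ds (hadamard_coeff dsA dsB u w)"
    using hadamard_coeff_loc_series[OF A _ B] by metis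
  let ?X = "{u. P u \<noteq> 0} \<times> {w. Q w \<noteq> 0}"
  have "(\<lambda>k. t (a k) (b k)) =
      (\<lambda>k. \<Sum>x\<in>?X. sP (hadamard_coeff dsA dsB (fst x) (snd x) k) (t (P (fst x)) (Q (snd x))))"
    unfolding a b bilinear_geom_prod[OF assms(1-4) A B P Q] sum.cartesian_product' by simp
  moreover have "\<exists>R. finite {k. R k \<noteq> 0} \<and>
      (\<lambda>k. \<Sum>x\<in>?X. sP (hadamard_coeff dsA dsB (fst x) (snd x) k) (t (P (fst x)) (Q (snd x)))) =
      geom_prod sP ds R"
    using P Q by (intro geom_prod_scale_sum_loc_series[OF assms(3) ds(1)] H) simp
  ultimately obtain R where "finite {k. R k \<noteq> 0}" "(\<lambda>k. t (a k) (b k)) = geom_prod sP ds R"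
    by auto
  thus ?thesis
    unfolding is_int_def localized_series_def using ds
    by (intro exI[of _ R] exI[of _ ds] conjI) (auto simp: proper_factors_def)
qed

end
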